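(* Let $\alpha\in(0,1]$ and let $b_2$ be a positive integer with $b_2<m^*$. Let $b_1'=\lceil\alpha n^*\rceil$ and $\epsilon=b_1'b_2\bigl(\frac{1}{\max\{b_1',m^*\}}-\frac{1}{n^*}\bigr)$. Then for every minimum set cover $S^{\min}$ and every maximum set packing $T^{\max}$, the pair $\bigl(b_1',(\sigma^1(S^{\min},b_1'),\sigma^2(T^{\max},b_2))\bigr)$ is a feasible solution of $(\mathcal P_\epsilon)$, and the optimal values of both $(\mathcal P)$ and $(\mathcal P_\epsilon)$ lie in the interval $[\lceil\alpha m^*\rceil,\lceil\alpha n^*\rceil]$; in particular the optimality gap of $b_1'$ is at most $\lceil\alpha n^*\rceil-\lceil\alpha m^*\rceil$.
   Context: Detection model: finite nonempty sets $\mathcal V$, $\mathcal E$, monitoring sets $\mathcal C_i\subseteq\mathcal E$ ($i\in\mathcal V$) with every $e\in\mathcal E$ in some $\mathcal C_i$; $\mathcal C_S=\bigcup_{i\in S}\mathcal C_i$; $F(S,T)=|\mathcal C_S\cap T|$. Set cover: $S\subseteq\mathcal V$ with $\mathcal C_S=\mathcal E$; $n^*$ = minimum size of a set cover (a minimum set cover has size $n^*$). Set packing: $T\subseteq\mathcal E$ with $|\mathcal C_i\cap T|\le1$ for all $i$; $m^*$ = maximum size (a maximum set packing has size $m^*$). Game $\Gamma(b_1,b_2)$ (positive integers $b_1,b_2$): $\mathcal A_1=\{S\subseteq\mathcal V:|S|\le b_1\}$, $\mathcal A_2=\{T\subseteq\mathcal E:|T|\le b_2\}$; mixed strategies $\sigma^1\in\Delta(\mathcal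 A_1)$, $\sigma^2\in\Delta(\mathcal A_2)$ (independent); payoffs $U_1=\mathbb E[F(S,T)]$, $U_2=\mathbb E[|T|]-\mathbb E[F(S,T)]$. $\Sigma(b_1,b_2)$ is the set of Nash equilibria; $\Sigma_\epsilon(b_1,b_2)$ the set of $\epsilon$-Nash equilibria (profiles where no player can gain more than $\epsilon$ by a unilateral deviation). Expected detection rate $r(\sigma)=\mathbb E[F(S,T)/|T|]$ for profiles whose attack strategy is supported on nonempty sets. Problem $(\mathcal P)$: minimize $b_1$ over positive integers $b_1$ and profiles $\sigma^\dagger$ subject to $r(\sigma^* )\ge\alpha$ for all $\sigma^*\in\Sigma(b_1,b_2)$ and $\sigma^\dagger\in\Sigma(b_1,b_2)$. Problem $(\mathcal P_\epsilon)$: the same, with the constraint $\sigma^\dagger\in\Sigma(b_1,b_2)$ replaced by $\sigma^\dagger\in\Sigma_\epsilon(b_1,b_2)$. Cyclic strategies: for $S=\{i_1,\dots,i_n\}$ with $n\ge b_1$, $S^k=\{i_k,\dots,i_{k+b_1-1}\}$ (indices cyclic mod $n$), $k=1,\dots,n$, and $\sigma^1(S,b_1)$ puts probability $1/n$ on each $S^k$; for $T=\{e_1,\dots,e_m\}$ with $m\ge b_2$, $T^l=\{e_l,\dots,e_{l+b_2-1}\}$ cyclically and $\sigma^2(T,b_2)$ puts probability $1/m$ on each $T^l$. *)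

theory Defs
  imports "HOL-Probability.Probability"
begin

definition cover_set :: "('v \<Rightarrow> 'e set) \<Rightarrow> 'v set \<Rightarrow> 'e set" where
  "cover_set C S = (\<Union>i\<in>S. C i)"

definition Fdet :: "('v \<Rightarrow> 'e set) \<Rightarrow> 'v set \<Rightarrow> 'e set \<Rightarrow> nat" where
  "Fdet C S T = card (cover_set C S \<inter> T)"

definition is_set_cover :: "'v set \<Rightarrow> 'e set \<Rightarrow> ('v \<Rightarrow> 'e set) \<Rightarrow> 'v set \<Rightarrow> bool" where
  "is_set_cover V E C S \<longleftrightarrow> S \<subseteq> V \<and> cover_set C S = E"

definition nstar :: "'v set \<Rightarrow> 'e set \<Rightarrow> ('v \<Rightarrow> 'e set) \<Rightarrow> nat" where
  "nstar V E C = (LEAST n. \<exists>S. is_set_cover V E C S \<and> card S = n)"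

definition is_min_set_cover :: "'v set \<Rightarrow> 'e set \<Rightarrow> ('v \<Rightarrow> 'e set) \<Rightarrow> 'v set \<Rightarrow> bool" where
  "is_min_set_cover V E C S \<longleftrightarrow> is_set_cover V E C S \<and> card S = nstar V E C"

definition is_set_packing :: "'v set \<Rightarrow> 'e set \<Rightarrow> ('v \<Rightarrow> 'e set) \<Rightarrow> 'e set \<Rightarrow> bool" where
  "is_set_packing V E C T \<longleftrightarrow> T \<subseteq> E \<and> (\<forall>i\<in>V. card (C i \<inter> T) \<le> 1)"

definition mstar :: "'v set \<Rightarrow> 'e set \<Rightarrow> ('v \<Rightarrow> 'e set) \<Rightarrow> nat" where
  "mstar V E C = Max {card T | T. is_set_packing V E C T}"

definition is_max_set_packing :: "'v set \<Rightarrow> 'e set \<Rightarrow> ('v \<Rightarrow> 'e set) \<Rightarrow> 'e set \<Rightarrow> bool" where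
  "is_max_set_packing V E C T \<longleftrightarrow> is_set_packing V E C T \<and> card T = mstar V E C"

definition A1 :: "'v set \<Rightarrow> nat \<Rightarrow> 'v set set" where
  "A1 V b1 = {S. S \<subseteq> V \<and> card S \<le> b1}"

definition A2 :: "'e set \<Rightarrow> nat \<Rightarrow> 'e set set" where
  "A2 E b2 = {T. T \<subseteq> E \<and> card T \<le> b2}"

definition U1 :: "('v \<Rightarrow> 'e set) \<Rightarrow> 'v set pmf \<Rightarrow> 'e set pmf \<Rightarrow> real" where
  "U1 C s1 s2 = measure_pmf.expectation (pair_pmf s1 s2) (\<lambda>(S, T). real (Fdet C S T))"

definition U2 :: "('v \<Rightarrow> 'e set) \<Rightarrow> 'v set pmf \<Rightarrow> 'e set pmf \<Rightarrow> real" where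
  "U2 C s1 s2 = measure_pmf.expectation (pair_pmf s1 s2) (\<lambda>(S, T). real (card T))
                 - U1 C s1 s2"

definition valid_profile :: "'v set \<Rightarrow> 'e set \<Rightarrow> nat \<Rightarrow> nat \<Rightarrow> 'v set pmf \<times> 'e set pmf \<Rightarrow> bool" where
  "valid_profile V E b1 b2 \<sigma> \<longleftrightarrow> set_pmf (fst \<sigma>) \<subseteq> A1 V b1 \<and> set_pmf (snd \<sigma>) \<subseteq> A2 E b2"

definition eps_nash :: "'v set \<Rightarrow> 'e set \<Rightarrow> ('v \<Rightarrow> 'e set) \<Rightarrow> nat \<Rightarrow> nat \<Rightarrow> real
    \<Rightarrow> 'v set pmf \<times> 'e set pmf \<Rightarrow> bool" where
  "eps_nash V E C b1 b2 \<epsilon> \<sigma> \<longleftrightarrow> valid_profile V E b1 b2 \<sigma> \<and>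
     (\<forall>\<tau>1. set_pmf \<tau>1 \<subseteq> A1 V b1 \<longrightarrow> U1 C \<tau>1 (snd \<sigma>) \<le> U1 C (fst \<sigma>) (snd \<sigma>) + \<epsilon>) \<and>
     (\<forall>\<tau>2. set_pmf \<tau>2 \<subseteq> A2 E b2 \<longrightarrow> U2 C (fst \<sigma>) \<tau>2 \<le> U2 C (fst \<sigma>) (snd \<sigma>) + \<epsilon>)"

definition nash :: "'v set \<Rightarrow> 'e set \<Rightarrow> ('v \<Rightarrow> 'e set) \<Rightarrow> nat \<Rightarrow> nat
    \<Rightarrow> 'v set pmf \<times> 'e set pmf \<Rightarrow> bool" where
  "nash V E C b1 b2 \<sigma> \<longleftrightarrow> eps_nash V E C b1 b2 0 \<sigma>"

text \<open>Expected detection rate (meaningful when the attack is supported on nonempty sets).\<close>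
definition det_rate :: "('v \<Rightarrow> 'e set) \<Rightarrow> 'v set pmf \<times> 'e set pmf \<Rightarrow> real" where
  "det_rate C \<sigma> = measure_pmf.expectation (pair_pmf (fst \<sigma>) (snd \<sigma>))
                    (\<lambda>(S, T). real (Fdet C S T) / real (card T))"

definition rate_ok :: "'v set \<Rightarrow> 'e set \<Rightarrow> ('v \<Rightarrow> 'e set) \<Rightarrow> real \<Rightarrow> nat \<Rightarrow> nat \<Rightarrow> bool" where
  "rate_ok V E C \<alpha> b1 b2 \<longleftrightarrow>
     (\<forall>\<sigma>. nash V E C b1 b2 \<sigma> \<and> {} \<notin> set_pmf (snd \<sigma>) \<longrightarrow> det_rate C \<sigma> \<ge> \<alpha>)"

definition feasible_P :: "'v set \<Rightarrow> 'e set \<Rightarrow> ('v \<Rightarrow> 'e set) \<Rightarrow> real \<Rightarrow> nat \<Rightarrow> nat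
    \<Rightarrow> 'v set pmf \<times> 'e set pmf \<Rightarrow> bool" where
  "feasible_P V E C \<alpha> b2 b1 \<sigma> \<longleftrightarrow> 0 < b1 \<and> rate_ok V E C \<alpha> b1 b2 \<and> nash V E C b1 b2 \<sigma>"

definition feasible_Peps :: "'v set \<Rightarrow> 'e set \<Rightarrow> ('v \<Rightarrow> 'e set) \<Rightarrow> real \<Rightarrow> nat \<Rightarrow> real \<Rightarrow> nat
    \<Rightarrow> 'v set pmf \<times> 'e set pmf \<Rightarrow> bool" where
  "feasible_Peps V E C \<alpha> b2 \<epsilon> b1 \<sigma> \<longleftrightarrow> 0 < b1 \<and> rate_ok V E C \<alpha> b1 b2 \<and> eps_nash V E C b1 b2 \<epsilon> \<sigma>"

definition opt_P :: "'v set \<Rightarrow> 'e set \<Rightarrow> ('v \<Rightarrow> 'e set) \<Rightarrow> real \<Rightarrow> nat \<Rightarrow> nat" where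
  "opt_P V E C \<alpha> b2 = (LEAST b1. \<exists>\<sigma>. feasible_P V E C \<alpha> b2 b1 \<sigma>)"

definition opt_Peps :: "'v set \<Rightarrow> 'e set \<Rightarrow> ('v \<Rightarrow> 'e set) \<Rightarrow> real \<Rightarrow> nat \<Rightarrow> real \<Rightarrow> nat" where
  "opt_Peps V E C \<alpha> b2 \<epsilon> = (LEAST b1. \<exists>\<sigma>. feasible_Peps V E C \<alpha> b2 \<epsilon> b1 \<sigma>)"

definition cyc_window :: "'a list \<Rightarrow> nat \<Rightarrow> nat \<Rightarrow> 'a set" where
  "cyc_window xs b k = {xs ! ((k + j) mod length xs) | j. j < b}"

definition cyc_strategy :: "'a list \<Rightarrow> nat \<Rightarrow> 'a set pmf" where
  "cyc_strategy xs b = map_pmf (cyc_window xs b) (pmf_of_set {..<length xs})"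

end

theory Submission
  imports Defs
begin

text \<open>
  At every Nash equilibrium of the detection game whose attacks are nonempty, the expected
  detection rate is at least b1/n* (if b1, b2 \<le> n*) and at most b1/m* (if b1 < m*). The defender
  may always deviate to the cyclic strategy over a minimum set cover, which covers every element
  with probability at least b1/n*; an exchange argument on the equilibrium supports turns this
  into the lower bound. The attacker may always deviate to the cyclic strategy over a maximum set
  packing, against which b1 vertices detect at most b1 of its m* elements; this gives the upper
  bound. Equilibria exist by the minimax theorem, so the budget \<lceil>\<alpha> n*\<rceil> guarantees
  rate \<alpha>, while every budget guaranteeing rate \<alpha> is at least \<lceil>\<alpha> m*\<rceil>. Finally, the
  two cyclic strategies form an \<epsilon>-equilibrium: against the cyclic attack any defense detects
  at most b1 b2 / max b1 m*, while the cyclic defense already secures b1 b2 / n*.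
\<close>

section \<open>Mixed strategies and the minimax theorem\<close>

definition prob_simplex :: "'a set \<Rightarrow> ('a \<Rightarrow> real) set" where
  "prob_simplex X = {x \<in> PiE X (\<lambda>_. {0..1}). sum x X = 1}"

lemma prob_simplex_nonneg: "x \<in> prob_simplex X \<Longrightarrow> i \<in> X \<Longrightarrow> 0 \<le> x i"
  by (auto simp: prob_simplex_def PiE_def Pi_def)

lemma prob_simplex_sum: "x \<in> prob_simplex X \<Longrightarrow> sum x X = 1"
  by (simp add: prob_simplex_def)

lemma prob_simplex_mean_ge:
  assumes "x \<in> prob_simplex X" "finite X" "\<forall>i\<in>X. c \<le> a i"
  shows "c \<le> (\<Sum>i\<in>X. x i * a i)"
proof -
  have "(\<Sum>i\<in>X. x i * c) \<le> (\<Sum>i\<in>X. x i * a i)"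
    using assms by (intro sum_mono mult_left_mono) (auto simp: prob_simplex_nonneg)
  thus ?thesis using prob_simplex_sum[OF assms(1)] by (simp add: sum_distrib_right[symmetric])
qed

lemma prob_simplex_mean_le:
  assumes "x \<in> prob_simplex X" "finite X" "\<forall>i\<in>X. a i \<le> c"
  shows "(\<Sum>i\<in>X. x i * a i) \<le> c"
  using prob_simplex_mean_ge[OF assms(1,2), of "- c" "\<lambda>i. - a i"] assms(3)
  by (simp add: sum_negf)

lemma prob_simplex_convex_comb:
  assumes "x \<in> prob_simplex X" "x' \<in> prob_simplex X" "0 \<le> e" "e \<le> 1" "finite X"
  shows "restrict (\<lambda>i. (1 - e) * x i + e * x' i) X \<in> prob_simplex X"
proof -
  have nonneg: "\<forall>i\<in>X. 0 \<le> (1 - e) * x i + e * x' i"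
    using assms by (auto simp: prob_simplex_nonneg)
  have sum: "(\<Sum>i\<in>X. (1 - e) * x i + e * x' i) = 1"
    using assms by (simp add: sum.distrib sum_distrib_left[symmetric] prob_simplex_sum)
  have "\<forall>i\<in>X. (1 - e) * x i + e * x' i \<le> 1"
    using member_le_sum[of _ X "\<lambda>i. (1 - e) * x i + e * x' i"] nonneg sum assms(5) by auto
  with nonneg sum show ?thesis by (auto simp: prob_simplex_def PiE_def Pi_def)
qed

lemma sum_convex_comb_mult:
  fixes x x' g :: "_ \<Rightarrow> real"
  shows "(\<Sum>i\<in>X. restrict (\<lambda>i. (1 - e) * x i + e * x' i) X i * g i) =
           (1 - e) * (\<Sum>i\<in>X. x i * g i) + e * (\<Sum>i\<in>X. x' i * g i)"
  by (simp add: ring_distribs sum.distrib sum_distrib_left mult.assoc)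

lemma prob_simplex_zero_extension:
  assumes "x \<in> prob_simplex X'" "X' \<subseteq> X" "finite X"
  shows "restrict (\<lambda>i. if i \<in> X' then x i else 0) X \<in> prob_simplex X"
proof -
  have "(\<Sum>i\<in>X. if i \<in> X' then x i else 0) = sum x X'"
    using assms(2,3) by (simp add: sum.If_cases Int_absorb1)
  with assms show ?thesis by (auto simp: prob_simplex_def PiE_def Pi_def)
qed

lemma sum_zero_extension_mult:
  fixes x g :: "_ \<Rightarrow> real"
  assumes "X' \<subseteq> X" "finite X"
  shows "(\<Sum>i\<in>X. restrict (\<lambda>i. if i \<in> X' then x i else 0) X i * g i) = (\<Sum>i\<in>X'. x i * g i)"
proof -
  have "(\<Sum>i\<in>X. restrict (\<lambda>i. if i \<in> X' then x i else 0) X i * g i) =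
          (\<Sum>i\<in>X. if i \<in> X' then x i * g i else 0)"
    by (intro sum.cong) auto
  also have "\<dots> = (\<Sum>i\<in>X'. x i * g i)"
    using assms by (simp add: sum.If_cases Int_absorb1)
  finally show ?thesis .
qed

lemma sum_bilinear_swap:
  fixes x y :: "_ \<Rightarrow> real"
  shows "(\<Sum>j\<in>Y. y j * (\<Sum>i\<in>X. x i * g i j)) = (\<Sum>i\<in>X. x i * (\<Sum>j\<in>Y. y j * g i j))"
  unfolding sum_distrib_left by (subst sum.swap) (simp add: mult.left_commute)

lemma continuous_map_Min:
  assumes "finite Y" "Y \<noteq> {}" "\<And>j. j \<in> Y \<Longrightarrow> continuous_map T euclideanreal (f j)"
  shows "continuous_map T euclideanreal (\<lambda>x. Min ((\<lambda>j. f j x) ` Y))"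
  using assms
proof (induction Y rule: finite_ne_induct)
  case (insert y F)
  have "(\<lambda>x. Min ((\<lambda>j. f j x) ` insert y F)) = (\<lambda>x. min (f y x) (Min ((\<lambda>j. f j x) ` F)))"
    using insert by simp
  then show ?case
    by (simp only:) (intro continuous_map_real_min insert; auto)
qed simp

lemma compactin_prob_simplex:
  assumes "finite X"
  shows "compactin (product_topology (\<lambda>_. euclideanreal) X) (prob_simplex X)"
proof -
  let ?T = "product_topology (\<lambda>_. euclideanreal) X"
  have "continuous_map ?T euclideanreal (\<lambda>x. sum x X)"
    by (intro continuous_map_sum assms) (auto intro: continuous_map_product_projection)
  hence "closedin ?T {x \<in> topspace ?T. sum x X \<in> {1}}"
    by (rule closedin_continuous_map_preimage) auto
  moreover have "prob_simplex X = PiE X (\<lambda>_. {0..1}) \<inter> {x \<in> topspace ?T. sum x X \<in> {1}}"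
    unfolding prob_simplex_def by (auto simp: PiE_def Pi_def)
  ultimately show ?thesis
    by (simp add: compact_Int_closedin compactin_PiE)
qed

lemma prob_simplex_maximin_attained:
  fixes g :: "'a \<Rightarrow> 'b \<Rightarrow> real"
  assumes "finite X" "X \<noteq> {}" "finite Y" "Y \<noteq> {}"
  obtains x0 v where "x0 \<in> prob_simplex X" "\<forall>j\<in>Y. v \<le> (\<Sum>i\<in>X. x0 i * g i j)"
    "\<forall>x\<in>prob_simplex X. \<exists>j\<in>Y. (\<Sum>i\<in>X. x i * g i j) \<le> v"
proof -
  let ?T = "product_topology (\<lambda>_. euclideanreal) X"
  let ?F = "\<lambda>x. Min ((\<lambda>j. \<Sum>i\<in>X. x i * g i j) ` Y)"
  have "continuous_map ?T euclideanreal ?F"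
    by (intro continuous_map_Min assms continuous_map_sum continuous_map_real_mult
          continuous_map_product_projection) auto
  hence "compactin euclideanreal (?F ` prob_simplex X)"
    by (rule image_compactin[OF compactin_prob_simplex[OF assms(1)]])
  hence compact: "compact (?F ` prob_simplex X)" by simp
  obtain i0 where "i0 \<in> X" using assms(2) by auto
  hence "restrict (\<lambda>i. if i = i0 then 1 else 0) X \<in> prob_simplex X"
    using assms(1) by (auto simp: prob_simplex_def)
  hence "?F ` prob_simplex X \<noteq> {}" by blast
  from compact_attains_sup[OF compact this]
  have "\<exists>x0\<in>prob_simplex X. \<forall>x\<in>prob_simplex X. ?F x \<le> ?F x0" by blast
  then obtain x0 where x0: "x0 \<in> prob_simplex X" "\<forall>x\<in>prob_simplex X. ?F x \<le> ?F x0"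
    by blast
  show thesis
  proof (rule that[OF x0(1)])
    show "\<forall>j\<in>Y. ?F x0 \<le> (\<Sum>i\<in>X. x0 i * g i j)" using assms(3) by simp
    show "\<forall>x\<in>prob_simplex X. \<exists>j\<in>Y. (\<Sum>i\<in>X. x i * g i j) \<le> ?F x0"
    proof
      fix x assume x: "x \<in> prob_simplex X"
      have "?F x \<in> (\<lambda>j. \<Sum>i\<in>X. x i * g i j) ` Y"
        using assms(3,4) by (intro Min_in) auto
      then obtain j where "j \<in> Y" "?F x = (\<Sum>i\<in>X. x i * g i j)" by auto
      moreover have "?F x \<le> ?F x0" using x0(2) x by blast
      ultimately show "\<exists>j\<in>Y. (\<Sum>i\<in>X. x i * g i j) \<le> ?F x0" by auto
    qed
  qed
qed

lemma small_positive_weight: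
  fixes d M :: real
  assumes "0 < d" "0 \<le> M"
  obtains e where "0 < e" "e \<le> 1" "e * M < d"
proof
  let ?e = "min 1 (d / (2 * (M + 1)))"
  show "0 < ?e" "?e \<le> 1" using assms by auto
  have "?e * M \<le> d / (2 * (M + 1)) * M" using assms by (intro mult_right_mono) auto
  also have "\<dots> < d" using assms by (simp add: field_simps add_nonneg_pos)
  finally show "?e * M < d" .
qed

definition saddle_point ::
    "'a set \<Rightarrow> 'b set \<Rightarrow> ('a \<Rightarrow> 'b \<Rightarrow> real) \<Rightarrow> ('a \<Rightarrow> real) \<Rightarrow> ('b \<Rightarrow> real) \<Rightarrow> real \<Rightarrow> bool" where
  "saddle_point X Y g x y v \<longleftrightarrow> x \<in> prob_simplex X \<and> y \<in> prob_simplex Y \<and>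
     (\<forall>j\<in>Y. v \<le> (\<Sum>i\<in>X. x i * g i j)) \<and> (\<forall>i\<in>X. (\<Sum>j\<in>Y. y j * g i j) \<le> v)"

lemma saddle_point_transpose:
  "saddle_point Y X (\<lambda>j i. - g i j) y x (- v) \<longleftrightarrow> saddle_point X Y g x y v"
  by (auto simp: saddle_point_def sum_negf)

text \<open>Loomis' argument: if some column is not tight at the maximin strategy x0 and the game
  without that column has a value above the maximin value, mixing a little of the optimal
  strategy of the smaller game into x0 would beat the maximin value.\<close>
lemma maximin_not_improvable:
  fixes g :: "'a \<Rightarrow> 'b \<Rightarrow> real"
  assumes fin: "finite X" "finite Y"
    and x0: "x0 \<in> prob_simplex X" "\<forall>j\<in>Y. v1 \<le> (\<Sum>i\<in>X. x0 i * g i j)"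
    and j0: "j0 \<in> Y" "v1 < (\<Sum>i\<in>X. x0 i * g i j0)"
    and maximin: "\<forall>x\<in>prob_simplex X. \<exists>j\<in>Y. (\<Sum>i\<in>X. x i * g i j) \<le> v1"
    and minimax: "\<forall>y\<in>prob_simplex Y. \<exists>i\<in>X. v2 \<le> (\<Sum>j\<in>Y. y j * g i j)"
    and gap: "v1 < v2"
    and smaller_game: "Y - {j0} \<noteq> {} \<Longrightarrow> \<exists>x y v. saddle_point X (Y - {j0}) g x y v"
  shows False
proof -
  define L where "L x j = (\<Sum>i\<in>X. x i * g i j)" for x j
  let ?Y' = "Y - {j0}"
  have "?Y' \<noteq> {}"
  proof
    assume "?Y' = {}"
    hence "Y = {j0}" using j0(1) by auto
    thus False using maximin x0(1) j0(2) by auto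
  qed
  then obtain x' y' v' where saddle: "saddle_point X ?Y' g x' y' v'"
    using smaller_game by blast
  define y'' where "y'' = restrict (\<lambda>j. if j \<in> ?Y' then y' j else 0) Y"
  have "y'' \<in> prob_simplex Y"
    unfolding y''_def using saddle fin by (intro prob_simplex_zero_extension) (auto simp: saddle_point_def)
  then obtain i where "i \<in> X" "v2 \<le> (\<Sum>j\<in>Y. y'' j * g i j)"
    using minimax by blast
  moreover have "(\<Sum>j\<in>Y. y'' j * g i j) = (\<Sum>j\<in>?Y'. y' j * g i j)"
    unfolding y''_def using fin by (intro sum_zero_extension_mult) auto
  ultimately have "v2 \<le> v'" using saddle by (force simp: saddle_point_def)
  have Lx': "\<forall>j\<in>?Y'. v' \<le> L x' j" using saddle by (simp add: saddle_point_def L_def)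
  obtain e where e: "0 < e" "e \<le> 1" "e * \<bar>L x' j0 - L x0 j0\<bar> < L x0 j0 - v1"
    using small_positive_weight[of "L x0 j0 - v1" "\<bar>L x' j0 - L x0 j0\<bar>"] j0 by (auto simp: L_def)
  define xe where "xe = restrict (\<lambda>i. (1 - e) * x0 i + e * x' i) X"
  have xe: "xe \<in> prob_simplex X"
    unfolding xe_def using prob_simplex_convex_comb[OF x0(1)] saddle e fin
    by (auto simp: saddle_point_def)
  have Lxe: "L xe j = (1 - e) * L x0 j + e * L x' j" for j
    unfolding L_def xe_def by (rule sum_convex_comb_mult)
  have "v1 < L xe j" if "j \<in> Y" for j
  proof (cases "j = j0")
    case True
    have "- \<bar>L x' j0 - L x0 j0\<bar> \<le> L x' j0 - L x0 j0" by linarith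
    hence "- (e * \<bar>L x' j0 - L x0 j0\<bar>) \<le> e * (L x' j0 - L x0 j0)"
      using mult_left_mono[of _ _ e] e(1) by (simp only: mult_minus_right[symmetric])
    then show ?thesis using e unfolding Lxe True by (simp add: algebra_simps)
  next
    case False
    have "(1 - e) * v1 \<le> (1 - e) * L x0 j" using x0(2) that e by (intro mult_left_mono) (auto simp: L_def)
    moreover have "e * v' \<le> e * L x' j" using Lx' that False e by (intro mult_left_mono) auto
    moreover have "e * v1 < e * v'" using e gap \<open>v2 \<le> v'\<close> by simp
    ultimately show ?thesis unfolding Lxe by (simp add: algebra_simps)
  qed
  thus False using maximin xe unfolding L_def by force
qed

theorem finite_game_minimax:
  fixes g :: "'a \<Rightarrow> 'b \<Rightarrow> real"
  assumes "finite X" "X \<noteq> {}" "finite Y" "Y \<noteq> {}"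
  shows "\<exists>x y v. saddle_point X Y g x y v"
  using assms
proof (induction "card X + card Y" arbitrary: X Y g rule: less_induct)
  case less
  note fin = less.prems
  obtain x0 v1 where x0: "x0 \<in> prob_simplex X" "\<forall>j\<in>Y. v1 \<le> (\<Sum>i\<in>X. x0 i * g i j)"
    and maximin: "\<forall>x\<in>prob_simplex X. \<exists>j\<in>Y. (\<Sum>i\<in>X. x i * g i j) \<le> v1"
    using prob_simplex_maximin_attained[OF fin] by blast
  obtain y0 w where y0: "y0 \<in> prob_simplex Y" "\<forall>i\<in>X. w \<le> (\<Sum>j\<in>Y. y0 j * - g i j)"
    and minimax': "\<forall>y\<in>prob_simplex Y. \<exists>i\<in>X. (\<Sum>j\<in>Y. y j * - g i j) \<le> w"
    using prob_simplex_maximin_attained[OF fin(3,4,1,2), of "\<lambda>j i. - g i j"] by blast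
  define v2 where "v2 = - w"
  have y0_le: "\<forall>i\<in>X. (\<Sum>j\<in>Y. y0 j * g i j) \<le> v2"
    and minimax: "\<forall>y\<in>prob_simplex Y. \<exists>i\<in>X. v2 \<le> (\<Sum>j\<in>Y. y j * g i j)"
    using y0(2) minimax' by (force simp: v2_def sum_negf)+
  have mean: "(\<Sum>j\<in>Y. y0 j * (\<Sum>i\<in>X. x0 i * g i j)) = (\<Sum>i\<in>X. x0 i * (\<Sum>j\<in>Y. y0 j * g i j))"
    by (rule sum_bilinear_swap)
  show ?case
  proof (cases "v2 \<le> v1")
    case True
    with x0 y0 y0_le show ?thesis unfolding saddle_point_def by force
  next
    case False
    hence gap: "v1 < v2" by simp
    have "(\<exists>j0\<in>Y. v1 < (\<Sum>i\<in>X. x0 i * g i j0)) \<or> (\<exists>i0\<in>X. (\<Sum>j\<in>Y. y0 j * g i0 j) < v2)"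
    proof (rule ccontr)
      assume "\<not> ?thesis"
      hence "(\<Sum>j\<in>Y. y0 j * (\<Sum>i\<in>X. x0 i * g i j)) \<le> v1"
        and "v2 \<le> (\<Sum>i\<in>X. x0 i * (\<Sum>j\<in>Y. y0 j * g i j))"
        using fin by (auto intro!: prob_simplex_mean_le[OF y0(1)] prob_simplex_mean_ge[OF x0(1)] simp: not_less)
      thus False using mean gap by linarith
    qed
    thus ?thesis
    proof
      assume "\<exists>j0\<in>Y. v1 < (\<Sum>i\<in>X. x0 i * g i j0)"
      then obtain j0 where j0: "j0 \<in> Y" "v1 < (\<Sum>i\<in>X. x0 i * g i j0)" by blast
      have "card X + card (Y - {j0}) < card X + card Y"
        using card_Diff1_less[OF fin(3) j0(1)] by simp
      with less.hyps fin have "Y - {j0} \<noteq> {} \<Longrightarrow> \<exists>x y v. saddle_point X (Y - {j0}) g x y v"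
        by blast
      from maximin_not_improvable[OF fin(1,3) x0 j0 maximin minimax gap this] show ?thesis ..
    next
      assume "\<exists>i0\<in>X. (\<Sum>j\<in>Y. y0 j * g i0 j) < v2"
      \<comment> \<open>symmetric to the first case, for the transposed game\<close>
      then obtain i0 where i0: "i0 \<in> X" "- v2 < (\<Sum>j\<in>Y. y0 j * - g i0 j)"
        by (auto simp: sum_negf)
      have "card (X - {i0}) + card Y < card X + card Y"
        using card_Diff1_less[OF fin(1) i0(1)] by simp
      with less.hyps fin have "X - {i0} \<noteq> {} \<Longrightarrow> \<exists>y x v. saddle_point Y (X - {i0}) (\<lambda>j i. - g i j) y x v"
        by (metis finite_Diff saddle_point_transpose)
      moreover have "\<forall>i\<in>X. - v2 \<le> (\<Sum>j\<in>Y. y0 j * - g i j)"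
        and "\<forall>y\<in>prob_simplex Y. \<exists>i\<in>X. (\<Sum>j\<in>Y. y j * - g i j) \<le> - v2"
        and "\<forall>x\<in>prob_simplex X. \<exists>j\<in>Y. - v1 \<le> (\<Sum>i\<in>X. x i * - g i j)"
        using y0_le minimax maximin by (force simp: sum_negf)+
      ultimately show ?thesis
        using maximin_not_improvable[where X = Y and Y = X and g = "\<lambda>j i. - g i j"
            and ?x0.0 = y0 and ?j0.0 = i0 and ?v1.0 = "- v2" and ?v2.0 = "- v1"] fin(1,3) y0(1) i0 gap
        by (simp only: neg_less_iff_less) blast
    qed
  qed
qed

lemma expectation_pmf_finite:
  fixes f :: "'a \<Rightarrow> real"
  assumes "finite A" "set_pmf s \<subseteq> A"
  shows "measure_pmf.expectation s f = (\<Sum>a\<in>A. pmf s a * f a)"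
  using assms by (subst integral_measure_pmf_real[of A]) (auto simp: mult.commute)

lemma expectation_pair_pmf_finite:
  fixes h :: "'a \<Rightarrow> 'b \<Rightarrow> real"
  assumes "finite A" "finite B" "set_pmf s \<subseteq> A" "set_pmf t \<subseteq> B"
  shows "measure_pmf.expectation (pair_pmf s t) (\<lambda>(a, b). h a b) =
           (\<Sum>a\<in>A. pmf s a * (\<Sum>b\<in>B. pmf t b * h a b))"
proof -
  have "measure_pmf.expectation (pair_pmf s t) (\<lambda>(a, b). h a b) =
          (\<Sum>ab\<in>A \<times> B. pmf (pair_pmf s t) ab * (case ab of (a, b) \<Rightarrow> h a b))"
    using assms by (intro expectation_pmf_finite) auto
  also have "\<dots> = (\<Sum>a\<in>A. \<Sum>b\<in>B. pmf s a * (pmf t b * h a b))"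
    unfolding sum.cartesian_product by (intro sum.cong) (auto simp: pmf_pair)
  finally show ?thesis by (simp add: sum_distrib_left)
qed

lemma sum_pmf_mono_on_support:
  fixes f g :: "'a \<Rightarrow> real"
  assumes "\<forall>a\<in>set_pmf s. f a \<le> g a"
  shows "(\<Sum>a\<in>A. pmf s a * f a) \<le> (\<Sum>a\<in>A. pmf s a * g a)"
proof (intro sum_mono)
  fix a
  show "pmf s a * f a \<le> pmf s a * g a"
    using assms by (cases "a \<in> set_pmf s") (auto intro: mult_left_mono simp: set_pmf_iff)
qed

lemma sum_pmf_const:
  assumes "finite A" "set_pmf s \<subseteq> A"
  shows "(\<Sum>a\<in>A. pmf s a * c) = c"
  using sum_pmf_eq_1[OF assms] by (simp add: sum_distrib_right[symmetric])

lemma sum_pmf_le_on_support: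
  fixes f :: "'a \<Rightarrow> real"
  assumes "finite A" "set_pmf s \<subseteq> A" "\<forall>a\<in>set_pmf s. f a \<le> c"
  shows "(\<Sum>a\<in>A. pmf s a * f a) \<le> c"
proof -
  have "(\<Sum>a\<in>A. pmf s a * f a) \<le> (\<Sum>a\<in>A. pmf s a * c)"
    using assms(3) by (intro sum_pmf_mono_on_support) simp
  also have "\<dots> = c" by (rule sum_pmf_const[OF assms(1,2)])
  finally show ?thesis .
qed

lemma sum_pmf_ge_on_support:
  fixes f :: "'a \<Rightarrow> real"
  assumes "finite A" "set_pmf s \<subseteq> A" "\<forall>a\<in>set_pmf s. c \<le> f a"
  shows "c \<le> (\<Sum>a\<in>A. pmf s a * f a)"
proof -
  have "c = (\<Sum>a\<in>A. pmf s a * c)" by (rule sum_pmf_const[OF assms(1,2), symmetric])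
  also have "\<dots> \<le> (\<Sum>a\<in>A. pmf s a * f a)"
    using assms(3) by (intro sum_pmf_mono_on_support) simp
  finally show ?thesis .
qed

lemma sum_pmf_eq_on_support:
  fixes f :: "'a \<Rightarrow> real"
  assumes "finite A" "set_pmf s \<subseteq> A" "\<forall>a\<in>set_pmf s. f a = c"
  shows "(\<Sum>a\<in>A. pmf s a * f a) = c"
  using assms by (intro antisym sum_pmf_le_on_support sum_pmf_ge_on_support) auto

lemma sum_pmf_superset:
  fixes f :: "'a \<Rightarrow> real"
  assumes "finite B" "set_pmf s \<subseteq> A" "A \<subseteq> B"
  shows "(\<Sum>a\<in>B. pmf s a * f a) = (\<Sum>a\<in>A. pmf s a * f a)"
  using assms by (intro sum.mono_neutral_right) (auto simp: set_pmf_iff)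

lemma mean_eq_max_imp_eq_on_support:
  fixes f :: "'a \<Rightarrow> real"
  assumes "finite A" "set_pmf s \<subseteq> A" "\<forall>a\<in>A. f a \<le> c"
    and "(\<Sum>a\<in>A. pmf s a * f a) = c" "a \<in> set_pmf s"
  shows "f a = c"
proof -
  have "(\<Sum>a\<in>A. pmf s a * (c - f a)) = (\<Sum>a\<in>A. pmf s a * c) - (\<Sum>a\<in>A. pmf s a * f a)"
    by (simp add: right_diff_distrib sum_subtractf)
  also have "\<dots> = 0" using sum_pmf_const[OF assms(1,2)] assms(4) by simp
  finally have zero: "(\<Sum>a\<in>A. pmf s a * (c - f a)) = 0" .
  have nonneg: "\<And>x. x \<in> A \<Longrightarrow> 0 \<le> pmf s x * (c - f x)"
    using assms(3) by simp
  have "a \<in> A" using assms(2,5) by blast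
  hence "pmf s a * (c - f a) = 0"
    using iffD1[OF sum_nonneg_eq_0_iff[OF assms(1)], OF nonneg zero] by blast
  thus ?thesis using pmf_positive[OF assms(5)] by simp
qed

lemma pmf_of_prob_simplex:
  assumes "finite A" "x \<in> prob_simplex A"
  obtains p where "\<And>a. pmf p a = (if a \<in> A then x a else 0)" "set_pmf p \<subseteq> A"
proof -
  define f where "f a = (if a \<in> A then x a else 0)" for a
  have nonneg: "0 \<le> f a" for a unfolding f_def using prob_simplex_nonneg[OF assms(2)] by auto
  have "(\<integral>\<^sup>+a. ennreal (f a) \<partial>count_space UNIV) = (\<Sum>a\<in>A. ennreal (f a))"
    using assms(1) unfolding f_def by (intro nn_integral_count_space') auto
  also have "\<dots> = ennreal (\<Sum>a\<in>A. f a)" using nonneg by simp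
  also have "(\<Sum>a\<in>A. f a) = 1" unfolding f_def using prob_simplex_sum[OF assms(2)] by simp
  finally have "(\<integral>\<^sup>+a. ennreal (f a) \<partial>count_space UNIV) = 1" by simp
  note nonneg_one = nonneg this
  show thesis
  proof (rule that[of "embed_pmf f"])
    show "pmf (embed_pmf f) a = (if a \<in> A then x a else 0)" for a
      using pmf_embed_pmf[OF nonneg_one] unfolding f_def .
    show "set_pmf (embed_pmf f) \<subseteq> A"
      using set_embed_pmf[OF nonneg_one] unfolding f_def by auto
  qed
qed

section \<open>Cyclic strategies\<close>

lemma add_mod_inj:
  fixes x y a n :: nat
  assumes "x < n" "y < n" "(x + a) mod n = (y + a) mod n"
  shows "x = y"
proof -
  have "u = w" if "u \<le> w" "w < n" "(u + a) mod n = (w + a) mod n" for u w :: nat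
  proof -
    have "n dvd w - u"
      using that mod_eq_dvd_iff_nat[of "u + a" "w + a" n] by simp
    have "w - u = 0"
    proof (rule ccontr)
      assume "w - u \<noteq> 0"
      hence "n \<le> w - u" using \<open>n dvd w - u\<close> by (simp add: dvd_imp_le)
      with that show False by linarith
    qed
    with that show ?thesis by simp
  qed
  from this[of x y] this[of y x] assms show ?thesis by (cases "x \<le> y") auto
qed

lemma cyc_window_subset: "xs \<noteq> [] \<Longrightarrow> cyc_window xs b k \<subseteq> set xs"
  unfolding cyc_window_def by auto

lemma card_cyc_window:
  assumes "distinct xs" "b \<le> length xs"
  shows "card (cyc_window xs b k) = b"
proof -
  let ?n = "length xs"
  have "cyc_window xs b k = (\<lambda>j. xs ! ((k + j) mod ?n)) ` {..<b}"
    unfolding cyc_window_def by auto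
  moreover have "inj_on (\<lambda>j. xs ! ((k + j) mod ?n)) {..<b}"
  proof (rule inj_onI)
    fix j j' assume j: "j \<in> {..<b}" "j' \<in> {..<b}"
      and eq: "xs ! ((k + j) mod ?n) = xs ! ((k + j') mod ?n)"
    hence "0 < ?n" using assms by auto
    with eq assms(1) have "(j + k) mod ?n = (j' + k) mod ?n"
      by (simp add: nth_eq_iff_index_eq add.commute)
    with j assms show "j = j'" by (intro add_mod_inj[of j ?n j' k]) auto
  qed
  ultimately show ?thesis by (simp add: card_image)
qed

lemma sum_cyc_window_indicator:
  assumes "distinct xs" "b \<le> length xs" "i < length xs"
  shows "(\<Sum>k<length xs. (if xs ! i \<in> cyc_window xs b k then 1 else 0 :: real)) = real b"
proof -
  let ?n = "length xs"
  have n0: "0 < ?n" using assms(3) by linarith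
  have windows: "(if xs ! i \<in> cyc_window xs b k then 1 else 0 :: real) =
          (\<Sum>j<b. if (k + j) mod ?n = i then 1 else 0)" for k
  proof -
    have "xs ! i = xs ! ((k + j) mod ?n) \<longleftrightarrow> (k + j) mod ?n = i" for j
    proof -
      have "(k + j) mod ?n < ?n" using n0 by simp
      thus ?thesis using nth_eq_iff_index_eq[OF assms(1,3)] by auto
    qed
    hence iff: "xs ! i \<in> cyc_window xs b k \<longleftrightarrow> (\<exists>j<b. (k + j) mod ?n = i)"
      unfolding cyc_window_def by auto
    have unique: "j = j'" if "j < b" "j' < b" "(k + j) mod ?n = i" "(k + j') mod ?n = i" for j j'
      using that assms by (intro add_mod_inj[of j ?n j' k]) (auto simp: add.commute)
    show ?thesis
    proof (cases "\<exists>j<b. (k + j) mod ?n = i")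
      case True
      then obtain j0 where j0: "j0 < b" "(k + j0) mod ?n = i" by blast
      with unique have "(\<Sum>j<b. if (k + j) mod ?n = i then 1 else 0 :: real) =
                          (\<Sum>j<b. if j = j0 then 1 else 0)"
        by (intro sum.cong) auto
      with iff True j0 show ?thesis by simp
    qed (use iff in simp)
  qed
  have each: "(\<Sum>k<?n. if (k + j) mod ?n = i then 1 else 0 :: real) = 1" for j
  proof -
    have inj: "inj_on (\<lambda>k. (k + j) mod ?n) {..<?n}"
      by (rule inj_onI) (auto intro: add_mod_inj)
    have "(\<lambda>k. (k + j) mod ?n) ` {..<?n} = {..<?n}"
      using inj n0 by (intro endo_inj_surj) auto
    hence "(\<Sum>m\<in>{..<?n}. if m = i then 1 else 0 :: real) =
             (\<Sum>k<?n. if (k + j) mod ?n = i then 1 else 0)"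
      using sum.reindex[OF inj, of "\<lambda>m. if m = i then 1 else 0 :: real"] by simp
    with assms show ?thesis by simp
  qed
  have "(\<Sum>k<?n. (if xs ! i \<in> cyc_window xs b k then 1 else 0 :: real)) =
          (\<Sum>k<?n. \<Sum>j<b. if (k + j) mod ?n = i then 1 else 0)"
    using windows by simp
  also have "\<dots> = (\<Sum>j<b. \<Sum>k<?n. if (k + j) mod ?n = i then 1 else 0)"
    by (rule sum.swap)
  finally show ?thesis using each by simp
qed

lemma set_pmf_cyc_strategy:
  "xs \<noteq> [] \<Longrightarrow> set_pmf (cyc_strategy xs b) = cyc_window xs b ` {..<length xs}"
  unfolding cyc_strategy_def by (subst set_map_pmf, subst set_pmf_of_set) auto

lemma cyc_strategy_support:
  assumes "distinct xs" "b \<le> length xs" "xs \<noteq> []" "W \<in> set_pmf (cyc_strategy xs b)"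
  shows "W \<subseteq> set xs" "card W = b"
proof -
  obtain k where "W = cyc_window xs b k"
    using assms(4) by (auto simp: set_pmf_cyc_strategy[OF assms(3)])
  thus "W \<subseteq> set xs" "card W = b"
    using cyc_window_subset[OF assms(3)] card_cyc_window[OF assms(1,2)] by auto
qed

lemma expectation_cyc_strategy:
  fixes f :: "'a set \<Rightarrow> real"
  assumes "xs \<noteq> []"
  shows "measure_pmf.expectation (cyc_strategy xs b) f =
           (\<Sum>k<length xs. f (cyc_window xs b k)) / length xs"
  unfolding cyc_strategy_def using assms by (subst integral_map_pmf, subst integral_pmf_of_set) auto

section \<open>Payoffs of the detection game\<close>

lemma A1_subset_Pow: "A1 V b \<subseteq> Pow V"
  unfolding A1_def by auto

lemma A2_subset_Pow: "A2 E b \<subseteq> Pow E"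
  unfolding A2_def by auto

lemma valid_profile_Pow:
  assumes "valid_profile V E b1 b2 (s, t)"
  shows "set_pmf s \<subseteq> Pow V" "set_pmf t \<subseteq> Pow E"
  using assms A1_subset_Pow[of V b1] A2_subset_Pow[of E b2] unfolding valid_profile_def by auto

locale detection_model =
  fixes V :: "'v set" and E :: "'e set" and C :: "'v \<Rightarrow> 'e set"
  assumes finite_V: "finite V" and finite_E: "finite E"
    and C_subset_E: "\<forall>i\<in>V. C i \<subseteq> E" and E_covered: "\<forall>e\<in>E. \<exists>i\<in>V. e \<in> C i"
begin

lemma finite_Pow_V: "finite (Pow V)"
  using finite_V by simp

lemma finite_Pow_E: "finite (Pow E)"
  using finite_E by simp

lemma finite_A1: "finite (A1 V b)"
  by (rule finite_subset[OF A1_subset_Pow finite_Pow_V])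

lemma finite_A2: "finite (A2 E b)"
  by (rule finite_subset[OF A2_subset_Pow finite_Pow_E])

lemma cover_set_subset: "S \<subseteq> V \<Longrightarrow> cover_set C S \<subseteq> E"
  using C_subset_E unfolding cover_set_def by auto

lemma finite_cover_set: "S \<subseteq> V \<Longrightarrow> finite (cover_set C S)"
  using cover_set_subset finite_E finite_subset by blast

lemma card_cover_set_inter_packing:
  assumes "is_set_packing V E C T" "S \<subseteq> V"
  shows "card (cover_set C S \<inter> T) \<le> card S"
proof -
  have "finite S" using assms(2) finite_V finite_subset by blast
  have "cover_set C S \<inter> T = (\<Union>i\<in>S. C i \<inter> T)" unfolding cover_set_def by auto
  hence "card (cover_set C S \<inter> T) \<le> (\<Sum>i\<in>S. card (C i \<inter> T))"
    using card_UN_le[OF \<open>finite S\<close>, of "\<lambda>i. C i \<inter> T"] by simp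
  also have "\<dots> \<le> (\<Sum>i\<in>S. 1)"
    using assms unfolding is_set_packing_def by (intro sum_mono) auto
  finally show ?thesis by simp
qed

text \<open>detection_gain t S and evasion_gain s T are the payoffs U1 and U2 of the pure strategies
  S and T; the marginals cover_prob and attack_prob make U1 bilinear.\<close>
definition cover_prob :: "'v set pmf \<Rightarrow> 'e \<Rightarrow> real" where
  "cover_prob s e = (\<Sum>S\<in>Pow V. pmf s S * (if e \<in> cover_set C S then 1 else 0))"

definition attack_prob :: "'e set pmf \<Rightarrow> 'e \<Rightarrow> real" where
  "attack_prob t e = (\<Sum>T\<in>Pow E. pmf t T * (if e \<in> T then 1 else 0))"

definition detection_gain :: "'e set pmf \<Rightarrow> 'v set \<Rightarrow> real" where
  "detection_gain t S = (\<Sum>T\<in>Pow E. pmf t T * real (Fdet C S T))"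

definition detected_count :: "'v set pmf \<Rightarrow> 'e set \<Rightarrow> real" where
  "detected_count s T = (\<Sum>S\<in>Pow V. pmf s S * real (Fdet C S T))"

definition evasion_gain :: "'v set pmf \<Rightarrow> 'e set \<Rightarrow> real" where
  "evasion_gain s T = real (card T) - detected_count s T"

lemma cover_prob_le_1: "set_pmf s \<subseteq> Pow V \<Longrightarrow> cover_prob s e \<le> 1"
  using sum_pmf_le_on_support[OF finite_Pow_V, of s "\<lambda>S. if e \<in> cover_set C S then 1 else 0" 1]
  unfolding cover_prob_def by simp

lemma attack_prob_nonneg: "0 \<le> attack_prob t e"
  unfolding attack_prob_def by (intro sum_nonneg) auto

lemma detection_gain_eq_sum:
  assumes "S \<subseteq> V"
  shows "detection_gain t S = (\<Sum>e\<in>cover_set C S. attack_prob t e)"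
proof -
  have "real (Fdet C S T) = (\<Sum>e\<in>cover_set C S. if e \<in> T then 1 else 0)" for T
    unfolding Fdet_def using finite_cover_set[OF assms] by (simp add: sum.If_cases)
  hence "detection_gain t S = (\<Sum>T\<in>Pow E. \<Sum>e\<in>cover_set C S. pmf t T * (if e \<in> T then 1 else 0))"
    unfolding detection_gain_def by (simp add: sum_distrib_left)
  also have "\<dots> = (\<Sum>e\<in>cover_set C S. attack_prob t e)"
    unfolding attack_prob_def by (rule sum.swap)
  finally show ?thesis .
qed

lemma detected_count_eq_sum:
  assumes "T \<subseteq> E"
  shows "detected_count s T = (\<Sum>e\<in>T. cover_prob s e)"
proof -
  have "finite T" using assms finite_E finite_subset by blast
  hence "real (Fdet C S T) = (\<Sum>e\<in>T. if e \<in> cover_set C S then 1 else 0)" for S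
    unfolding Fdet_def by (simp add: sum.If_cases Int_commute)
  hence "detected_count s T = (\<Sum>S\<in>Pow V. \<Sum>e\<in>T. pmf s S * (if e \<in> cover_set C S then 1 else 0))"
    unfolding detected_count_def by (simp add: sum_distrib_left)
  also have "\<dots> = (\<Sum>e\<in>T. cover_prob s e)"
    unfolding cover_prob_def by (rule sum.swap)
  finally show ?thesis .
qed

lemma evasion_gain_eq_sum:
  "T \<subseteq> E \<Longrightarrow> evasion_gain s T = (\<Sum>e\<in>T. 1 - cover_prob s e)"
  by (simp add: evasion_gain_def detected_count_eq_sum sum_subtractf)

lemma U1_eq_mean_detection_gain:
  assumes "set_pmf s \<subseteq> A" "A \<subseteq> Pow V" "set_pmf t \<subseteq> Pow E"
  shows "U1 C s t = (\<Sum>S\<in>A. pmf s S * detection_gain t S)"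
  unfolding U1_def detection_gain_def
  using assms finite_Pow_V finite_subset
  by (intro expectation_pair_pmf_finite finite_Pow_E) blast+

lemma U1_eq_mean_detected_count:
  assumes "set_pmf s \<subseteq> Pow V" "set_pmf t \<subseteq> B" "B \<subseteq> Pow E"
  shows "U1 C s t = (\<Sum>T\<in>B. pmf t T * detected_count s T)"
proof -
  have "finite B" using assms(3) finite_Pow_E finite_subset by blast
  hence "U1 C s t = (\<Sum>S\<in>Pow V. pmf s S * (\<Sum>T\<in>B. pmf t T * real (Fdet C S T)))"
    unfolding U1_def using assms by (intro expectation_pair_pmf_finite finite_Pow_V)
  also have "\<dots> = (\<Sum>T\<in>B. pmf t T * detected_count s T)"
    unfolding detected_count_def by (rule sum_bilinear_swap)
  finally show ?thesis .
qed

lemma U2_eq_mean_evasion_gain: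
  assumes "set_pmf s \<subseteq> Pow V" "set_pmf t \<subseteq> B" "B \<subseteq> Pow E"
  shows "U2 C s t = (\<Sum>T\<in>B. pmf t T * evasion_gain s T)"
proof -
  have "finite B" using assms(3) finite_Pow_E finite_subset by blast
  hence "measure_pmf.expectation (pair_pmf s t) (\<lambda>(S, T). real (card T)) =
          (\<Sum>S\<in>Pow V. pmf s S * (\<Sum>T\<in>B. pmf t T * real (card T)))"
    using assms by (intro expectation_pair_pmf_finite finite_Pow_V)
  also have "\<dots> = (\<Sum>T\<in>B. pmf t T * real (card T))"
    using sum_pmf_const[OF finite_Pow_V assms(1)] .
  finally show ?thesis
    unfolding U2_def U1_eq_mean_detected_count[OF assms] evasion_gain_def
    by (simp add: right_diff_distrib sum_subtractf)
qed

lemma mean_card_eq_sum_attack_prob: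
  assumes "set_pmf t \<subseteq> Pow E"
  shows "(\<Sum>T\<in>Pow E. pmf t T * real (card T)) = (\<Sum>e\<in>E. attack_prob t e)"
proof -
  have "real (card T) = (\<Sum>e\<in>E. if e \<in> T then 1 else 0)" if "T \<in> Pow E" for T
    using that finite_E by (simp add: sum.If_cases Int_absorb1)
  hence "(\<Sum>T\<in>Pow E. pmf t T * real (card T)) =
           (\<Sum>T\<in>Pow E. \<Sum>e\<in>E. pmf t T * (if e \<in> T then 1 else 0))"
    by (simp add: sum_distrib_left)
  also have "\<dots> = (\<Sum>e\<in>E. attack_prob t e)"
    unfolding attack_prob_def by (rule sum.swap)
  finally show ?thesis .
qed

lemma U1_eq_sum_cover_attack:
  assumes "set_pmf s \<subseteq> Pow V" "set_pmf t \<subseteq> Pow E"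
  shows "U1 C s t = (\<Sum>e\<in>E. cover_prob s e * attack_prob t e)"
proof -
  have "detected_count s T = (\<Sum>e\<in>E. if e \<in> T then cover_prob s e else 0)" if "T \<in> Pow E" for T
    using that finite_E by (simp add: detected_count_eq_sum sum.If_cases Int_absorb1)
  hence "U1 C s t = (\<Sum>T\<in>Pow E. \<Sum>e\<in>E. pmf t T * (if e \<in> T then cover_prob s e else 0))"
    using U1_eq_mean_detected_count[OF assms order_refl] by (simp add: sum_distrib_left)
  also have "\<dots> = (\<Sum>e\<in>E. \<Sum>T\<in>Pow E. pmf t T * (if e \<in> T then cover_prob s e else 0))"
    by (rule sum.swap)
  also have "\<dots> = (\<Sum>e\<in>E. cover_prob s e * attack_prob t e)"
    unfolding attack_prob_def sum_distrib_left by (intro sum.cong) auto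
  finally show ?thesis .
qed

lemma U2_eq_sum_attack_prob_minus_U1:
  assumes "set_pmf s \<subseteq> Pow V" "set_pmf t \<subseteq> Pow E"
  shows "U2 C s t = (\<Sum>e\<in>E. attack_prob t e) - U1 C s t"
  using U2_eq_mean_evasion_gain[OF assms order_refl] U1_eq_mean_detected_count[OF assms order_refl]
    mean_card_eq_sum_attack_prob[OF assms(2)]
  by (simp add: evasion_gain_def right_diff_distrib sum_subtractf)

lemma det_rate_eq_mean:
  assumes "set_pmf s \<subseteq> Pow V" "set_pmf t \<subseteq> Pow E"
  shows "det_rate C (s, t) = (\<Sum>T\<in>Pow E. pmf t T * (detected_count s T / real (card T)))"
proof -
  have "det_rate C (s, t) =
          (\<Sum>S\<in>Pow V. pmf s S * (\<Sum>T\<in>Pow E. pmf t T * (real (Fdet C S T) / real (card T))))"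
    unfolding det_rate_def fst_conv snd_conv
    using assms by (intro expectation_pair_pmf_finite finite_Pow_V finite_Pow_E)
  also have "\<dots> = (\<Sum>T\<in>Pow E. pmf t T * (detected_count s T / real (card T)))"
    unfolding detected_count_def sum_divide_distrib sum_distrib_left
    by (subst sum.swap) (simp add: mult_ac)
  finally show ?thesis .
qed


section \<open>Equilibria\<close>

lemma eps_nash_detection_gain_le:
  assumes "eps_nash V E C b1 b2 \<epsilon> (s, t)" "S \<in> A1 V b1"
  shows "detection_gain t S \<le> U1 C s t + \<epsilon>"
proof -
  have valid: "valid_profile V E b1 b2 (s, t)"
    using assms(1) unfolding eps_nash_def by simp
  have "U1 C (return_pmf S) t \<le> U1 C s t + \<epsilon>"
    using assms unfolding eps_nash_def by simp
  moreover have "S \<in> Pow V" using assms(2) A1_subset_Pow[of V] by blast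
  hence "U1 C (return_pmf S) t = detection_gain t S"
    using U1_eq_mean_detection_gain[of "return_pmf S" "{S}" t] valid_profile_Pow[OF valid] by simp
  ultimately show ?thesis by simp
qed

lemma eps_nash_evasion_gain_le:
  assumes "eps_nash V E C b1 b2 \<epsilon> (s, t)" "T \<in> A2 E b2"
  shows "evasion_gain s T \<le> U2 C s t + \<epsilon>"
proof -
  have valid: "valid_profile V E b1 b2 (s, t)"
    using assms(1) unfolding eps_nash_def by simp
  have "U2 C s (return_pmf T) \<le> U2 C s t + \<epsilon>"
    using assms unfolding eps_nash_def by simp
  moreover have "T \<in> Pow E" using assms(2) A2_subset_Pow[of E] by blast
  hence "U2 C s (return_pmf T) = evasion_gain s T"
    using U2_eq_mean_evasion_gain[of s "return_pmf T" "{T}"] valid_profile_Pow[OF valid] by simp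
  ultimately show ?thesis by simp
qed

text \<open>Payoffs are linear in each player's own mixed strategy, so pure deviations suffice.\<close>
lemma eps_nashI:
  assumes "valid_profile V E b1 b2 (s, t)"
    and "\<forall>S\<in>A1 V b1. detection_gain t S \<le> U1 C s t + \<epsilon>"
    and "\<forall>T\<in>A2 E b2. evasion_gain s T \<le> U2 C s t + \<epsilon>"
  shows "eps_nash V E C b1 b2 \<epsilon> (s, t)"
proof -
  note Pow = valid_profile_Pow[OF assms(1)]
  have "U1 C s' t \<le> U1 C s t + \<epsilon>" if "set_pmf s' \<subseteq> A1 V b1" for s'
    using assms(2) that U1_eq_mean_detection_gain[OF that A1_subset_Pow Pow(2)]
    by (auto intro!: sum_pmf_le_on_support[OF finite_A1])
  moreover have "U2 C s t' \<le> U2 C s t + \<epsilon>" if "set_pmf t' \<subseteq> A2 E b2" for t'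
    using assms(3) that U2_eq_mean_evasion_gain[OF Pow(1) that A2_subset_Pow]
    by (auto intro!: sum_pmf_le_on_support[OF finite_A2])
  ultimately show ?thesis using assms(1) unfolding eps_nash_def by auto
qed

lemma nash_detection_gain_on_support:
  assumes "nash V E C b1 b2 (s, t)" "S \<in> set_pmf s"
  shows "detection_gain t S = U1 C s t"
proof (rule mean_eq_max_imp_eq_on_support[OF finite_A1 _ _ _ assms(2)])
  have valid: "valid_profile V E b1 b2 (s, t)"
    using assms(1) unfolding nash_def eps_nash_def by simp
  thus "set_pmf s \<subseteq> A1 V b1" unfolding valid_profile_def by simp
  thus "(\<Sum>S\<in>A1 V b1. pmf s S * detection_gain t S) = U1 C s t"
    using U1_eq_mean_detection_gain[OF _ A1_subset_Pow valid_profile_Pow(2)[OF valid]] by simp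
  show "\<forall>S\<in>A1 V b1. detection_gain t S \<le> U1 C s t"
    using eps_nash_detection_gain_le assms(1) unfolding nash_def by fastforce
qed

lemma nash_evasion_gain_on_support:
  assumes "nash V E C b1 b2 (s, t)" "T \<in> set_pmf t"
  shows "evasion_gain s T = U2 C s t"
proof (rule mean_eq_max_imp_eq_on_support[OF finite_A2 _ _ _ assms(2)])
  have valid: "valid_profile V E b1 b2 (s, t)"
    using assms(1) unfolding nash_def eps_nash_def by simp
  thus "set_pmf t \<subseteq> A2 E b2" unfolding valid_profile_def by simp
  thus "(\<Sum>T\<in>A2 E b2. pmf t T * evasion_gain s T) = U2 C s t"
    using U2_eq_mean_evasion_gain[OF valid_profile_Pow(1)[OF valid] _ A2_subset_Pow] by simp
  show "\<forall>T\<in>A2 E b2. evasion_gain s T \<le> U2 C s t"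
    using eps_nash_evasion_gain_le assms(1) unfolding nash_def by fastforce
qed

text \<open>The zero-sum game with attacker payoff card T - Fdet C S T has a saddle point;
  since U1 and U2 differ only by a term depending on the attacker's strategy alone,
  the saddle point is a Nash equilibrium.\<close>
lemma nash_exists: "\<exists>\<sigma>. nash V E C b1 b2 \<sigma>"
proof -
  let ?X = "A2 E b2" and ?Y = "A1 V b1"
  define g where "g T S = real (card T) - real (Fdet C S T)" for T S
  have "?X \<noteq> {}" "?Y \<noteq> {}" unfolding A1_def A2_def by auto
  then obtain x y v where "saddle_point ?X ?Y g x y v"
    using finite_game_minimax[OF finite_A2 _ finite_A1] by blast
  hence x: "x \<in> prob_simplex ?X" and y: "y \<in> prob_simplex ?Y"
    and h1: "\<forall>S\<in>?Y. v \<le> (\<Sum>T\<in>?X. x T * g T S)" and h2: "\<forall>T\<in>?X. (\<Sum>S\<in>?Y. y S * g T S) \<le> v"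
    unfolding saddle_point_def by auto
  obtain s where ps: "\<And>S. pmf s S = (if S \<in> ?Y then y S else 0)" and ss: "set_pmf s \<subseteq> ?Y"
    using pmf_of_prob_simplex[OF finite_A1 y] by blast
  obtain t where pt: "\<And>T. pmf t T = (if T \<in> ?X then x T else 0)" and st: "set_pmf t \<subseteq> ?X"
    using pmf_of_prob_simplex[OF finite_A2 x] by blast
  have valid: "valid_profile V E b1 b2 (s, t)" unfolding valid_profile_def using ss st by simp
  note Pow = valid_profile_Pow[OF valid]
  define K where "K = (\<Sum>T\<in>?X. x T * real (card T))"
  have detection: "detection_gain t S = K - (\<Sum>T\<in>?X. x T * g T S)" for S
    using sum_pmf_superset[OF finite_Pow_E st A2_subset_Pow, of "\<lambda>T. real (Fdet C S T)"]
    unfolding detection_gain_def K_def g_def by (simp add: pt right_diff_distrib sum_subtractf)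
  have evasion: "evasion_gain s T = (\<Sum>S\<in>?Y. y S * g T S)" for T
    using sum_pmf_superset[OF finite_Pow_V ss A1_subset_Pow, of "\<lambda>S. real (Fdet C S T)"]
      prob_simplex_sum[OF y]
    unfolding evasion_gain_def detected_count_def g_def
    by (simp add: ps right_diff_distrib sum_subtractf sum_distrib_right[symmetric])
  have "U1 C s t = K - (\<Sum>S\<in>?Y. y S * (\<Sum>T\<in>?X. x T * g T S))"
    using U1_eq_mean_detection_gain[OF ss A1_subset_Pow Pow(2)] prob_simplex_sum[OF y]
    by (simp add: ps detection right_diff_distrib sum_subtractf sum_distrib_right[symmetric])
  also have swap: "(\<Sum>S\<in>?Y. y S * (\<Sum>T\<in>?X. x T * g T S)) = (\<Sum>T\<in>?X. x T * (\<Sum>S\<in>?Y. y S * g T S))"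
    by (rule sum_bilinear_swap)
  finally have U1: "U1 C s t = K - \<dots>" .
  have U2: "U2 C s t = (\<Sum>T\<in>?X. x T * (\<Sum>S\<in>?Y. y S * g T S))"
    using U2_eq_mean_evasion_gain[OF Pow(1) st A2_subset_Pow] by (simp add: pt evasion)
  have "v \<le> U2 C s t" "U2 C s t \<le> v"
    using prob_simplex_mean_ge[OF y finite_A1 h1] prob_simplex_mean_le[OF x finite_A2 h2]
      swap U2 by simp_all
  hence "eps_nash V E C b1 b2 0 (s, t)"
    using h1 h2 U1 U2 by (intro eps_nashI[OF valid]) (auto simp: detection evasion)
  thus ?thesis unfolding nash_def by blast
qed

lemma cyc_strategy_A1:
  assumes "distinct xs" "set xs \<subseteq> V" "b \<le> length xs" "xs \<noteq> []"
  shows "set_pmf (cyc_strategy xs b) \<subseteq> A1 V b"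
  using cyc_strategy_support[OF assms(1,3,4)] assms(2) unfolding A1_def by blast

lemma cyc_strategy_A2:
  assumes "distinct ys" "set ys \<subseteq> E" "b \<le> length ys" "ys \<noteq> []"
  shows "set_pmf (cyc_strategy ys b) \<subseteq> A2 E b"
  using cyc_strategy_support[OF assms(1,3,4)] assms(2) unfolding A2_def by blast

text \<open>The element lies in C i for some i on the list, and i lies in b of the n windows.\<close>
lemma cover_prob_cyc_strategy_ge:
  assumes "distinct xs" "set xs \<subseteq> V" "b \<le> length xs" "xs \<noteq> []"
    and "cover_set C (set xs) = E" "e \<in> E"
  shows "real b / real (length xs) \<le> cover_prob (cyc_strategy xs b) e"
proof -
  let ?s = "cyc_strategy xs b"
  have "set_pmf ?s \<subseteq> Pow V" using cyc_strategy_A1[OF assms(1-4)] A1_subset_Pow[of V] by blast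
  hence "cover_prob ?s e = measure_pmf.expectation ?s (\<lambda>S. if e \<in> cover_set C S then 1 else 0)"
    unfolding cover_prob_def by (simp add: expectation_pmf_finite[OF finite_Pow_V])
  also have "\<dots> = (\<Sum>k<length xs. if e \<in> cover_set C (cyc_window xs b k) then 1 else 0) / length xs"
    by (rule expectation_cyc_strategy[OF assms(4)])
  finally have cover_prob: "cover_prob ?s e = \<dots>" .
  obtain i where i: "i < length xs" "e \<in> C (xs ! i)"
    using assms(5,6) unfolding cover_set_def by (auto simp: in_set_conv_nth)
  have "real b = (\<Sum>k<length xs. (if xs ! i \<in> cyc_window xs b k then 1 else 0 :: real))"
    using sum_cyc_window_indicator[OF assms(1,3) i(1)] by simp
  also have "\<dots> \<le> (\<Sum>k<length xs. if e \<in> cover_set C (cyc_window xs b k) then 1 else 0)"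
    using i by (intro sum_mono) (auto simp: cover_set_def)
  finally show ?thesis unfolding cover_prob by (simp add: divide_right_mono)
qed

lemma attack_prob_cyc_strategy:
  assumes "distinct ys" "set ys \<subseteq> E" "b \<le> length ys" "ys \<noteq> []"
  shows "attack_prob (cyc_strategy ys b) e = (if e \<in> set ys then real b / real (length ys) else 0)"
proof -
  let ?t = "cyc_strategy ys b"
  have "set_pmf ?t \<subseteq> Pow E" using cyc_strategy_A2[OF assms] A2_subset_Pow[of E] by blast
  hence "attack_prob ?t e = measure_pmf.expectation ?t (\<lambda>T. if e \<in> T then 1 else 0)"
    unfolding attack_prob_def by (simp add: expectation_pmf_finite[OF finite_Pow_E])
  also have "\<dots> = (\<Sum>k<length ys. if e \<in> cyc_window ys b k then 1 else 0) / length ys"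
    by (rule expectation_cyc_strategy[OF assms(4)])
  finally have attack_prob: "attack_prob ?t e = \<dots>" .
  show ?thesis
  proof (cases "e \<in> set ys")
    case True
    then obtain i where i: "i < length ys" "e = ys ! i" by (auto simp: in_set_conv_nth)
    show ?thesis
      unfolding attack_prob using sum_cyc_window_indicator[OF assms(1,3) i(1)] True i(2) by simp
  next
    case False
    hence "e \<notin> cyc_window ys b k" for k using cyc_window_subset[OF assms(4)] by blast
    thus ?thesis unfolding attack_prob using False by simp
  qed
qed

lemma U1_cyc_attack:
  assumes "distinct ys" "set ys \<subseteq> E" "b \<le> length ys" "ys \<noteq> []" "set_pmf s \<subseteq> Pow V"
  shows "U1 C s (cyc_strategy ys b) = real b / real (length ys) * detected_count s (set ys)"
proof -
  have "set_pmf (cyc_strategy ys b) \<subseteq> Pow E"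
    using cyc_strategy_A2[OF assms(1-4)] A2_subset_Pow[of E] by blast
  hence "U1 C s (cyc_strategy ys b) =
           (\<Sum>e\<in>E. if e \<in> set ys then real b / real (length ys) * cover_prob s e else 0)"
    using assms by (simp add: U1_eq_sum_cover_attack attack_prob_cyc_strategy if_distrib mult.commute cong: if_cong)
  also have "\<dots> = real b / real (length ys) * (\<Sum>e\<in>set ys. cover_prob s e)"
    using assms(2) finite_E by (simp add: sum.If_cases Int_absorb1 sum_distrib_left)
  finally show ?thesis using assms(2) by (simp add: detected_count_eq_sum)
qed

lemma sum_attack_prob_cyc_strategy:
  assumes "distinct ys" "set ys \<subseteq> E" "b \<le> length ys" "ys \<noteq> []"
  shows "(\<Sum>e\<in>E. attack_prob (cyc_strategy ys b) e) = real b"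
proof -
  have "(\<Sum>e\<in>E. attack_prob (cyc_strategy ys b) e) = real (card (set ys)) * (real b / real (length ys))"
    using assms(2) finite_E
    by (simp add: attack_prob_cyc_strategy[OF assms] sum.If_cases Int_absorb1)
  also have "\<dots> = real b" using assms(1,4) by (simp add: distinct_card)
  finally show ?thesis .
qed

lemma U2_cyc_attack:
  assumes "distinct ys" "set ys \<subseteq> E" "b \<le> length ys" "ys \<noteq> []" "set_pmf s \<subseteq> Pow V"
  shows "U2 C s (cyc_strategy ys b) = real b - U1 C s (cyc_strategy ys b)"
  using U2_eq_sum_attack_prob_minus_U1[OF assms(5)] cyc_strategy_A2[OF assms(1-4)] A2_subset_Pow
    sum_attack_prob_cyc_strategy[OF assms(1-4)] by (metis order_trans)

lemma U1_cyc_defense_ge: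
  assumes "distinct xs" "set xs \<subseteq> V" "b \<le> length xs" "xs \<noteq> []"
    and "cover_set C (set xs) = E" "set_pmf t \<subseteq> Pow E"
  shows "real b / real (length xs) * (\<Sum>e\<in>E. attack_prob t e) \<le> U1 C (cyc_strategy xs b) t"
proof -
  have "real b / real (length xs) * (\<Sum>e\<in>E. attack_prob t e) =
          (\<Sum>e\<in>E. real b / real (length xs) * attack_prob t e)"
    by (simp add: sum_distrib_left)
  also have "\<dots> \<le> (\<Sum>e\<in>E. cover_prob (cyc_strategy xs b) e * attack_prob t e)"
    using cover_prob_cyc_strategy_ge[OF assms(1-5)] attack_prob_nonneg
    by (intro sum_mono mult_right_mono) auto
  also have "\<dots> = U1 C (cyc_strategy xs b) t"
    using cyc_strategy_A1[OF assms(1-4)] A1_subset_Pow assms(6)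
    by (intro U1_eq_sum_cover_attack[symmetric]) blast+
  finally show ?thesis .
qed

section \<open>Detection rate at equilibria\<close>

lemma detected_count_packing_le:
  assumes "set_pmf s \<subseteq> A1 V b1" "is_set_packing V E C Y"
  shows "detected_count s Y \<le> real b1"
  unfolding detected_count_def
proof (rule sum_pmf_le_on_support[OF finite_Pow_V])
  show "set_pmf s \<subseteq> Pow V" using assms(1) A1_subset_Pow[of V] by blast
  show "\<forall>S\<in>set_pmf s. real (Fdet C S Y) \<le> real b1"
  proof
    fix S assume "S \<in> set_pmf s"
    hence "S \<subseteq> V" "card S \<le> b1" using assms(1) unfolding A1_def by auto
    moreover from this have "card (cover_set C S \<inter> Y) \<le> card S"
      by (intro card_cover_set_inter_packing[OF assms(2)])
    ultimately show "real (Fdet C S Y) \<le> real b1" unfolding Fdet_def by simp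
  qed
qed

lemma nash_U2_ge_packing:
  assumes nash: "nash V E C b1 b2 (s, t)"
    and ys: "distinct ys" "is_set_packing V E C (set ys)" "b2 \<le> length ys" "ys \<noteq> []"
  shows "real b2 - real b2 / real (length ys) * real b1 \<le> U2 C s t"
proof -
  let ?t = "cyc_strategy ys b2"
  have valid: "valid_profile V E b1 b2 (s, t)"
    using nash unfolding nash_def eps_nash_def by simp
  have Y: "set ys \<subseteq> E" using ys(2) unfolding is_set_packing_def by simp
  have "U2 C s ?t \<le> U2 C s t"
    using nash cyc_strategy_A2[OF ys(1) Y ys(3,4)] unfolding nash_def eps_nash_def by simp
  moreover have "U2 C s ?t = real b2 - real b2 / real (length ys) * detected_count s (set ys)"
    using U2_cyc_attack U1_cyc_attack ys(1,3,4) Y valid_profile_Pow(1)[OF valid] by simp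
  moreover have "detected_count s (set ys) \<le> real b1"
    using valid ys(2) unfolding valid_profile_def by (intro detected_count_packing_le) auto
  hence "real b2 / real (length ys) * detected_count s (set ys) \<le> real b2 / real (length ys) * real b1"
    by (intro mult_left_mono) auto
  ultimately show ?thesis by linarith
qed

text \<open>On the support of an equilibrium attack the undetected count card T - Fdet equals
  U2 > 0, so the detection rate of T is at most 1 - U2 / b2.\<close>
lemma nash_det_rate_le_packing:
  assumes nash: "nash V E C b1 b2 (s, t)"
    and ys: "distinct ys" "is_set_packing V E C (set ys)" "b2 \<le> length ys" "b1 < length ys"
    and "0 < b2"
  shows "{} \<notin> set_pmf t \<and> det_rate C (s, t) \<le> real b1 / real (length ys)"
proof -
  let ?m = "real (length ys)"
  have valid: "valid_profile V E b1 b2 (s, t)"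
    using nash unfolding nash_def eps_nash_def by simp
  note Pow = valid_profile_Pow[OF valid]
  have U2: "real b2 - real b2 / ?m * real b1 \<le> U2 C s t"
    using ys(4) by (intro nash_U2_ge_packing[OF nash ys(1-3)]) auto
  have "real b1 / ?m < 1" using ys(4) by (simp add: divide_less_eq)
  hence "real b2 / ?m * real b1 < real b2"
    using \<open>0 < b2\<close> mult_strict_left_mono[of "real b1 / ?m" 1 "real b2"] by simp
  hence U2_pos: "0 < U2 C s t" using U2 by linarith
  have support: "evasion_gain s T = U2 C s t" if "T \<in> set_pmf t" for T
    using nash_evasion_gain_on_support[OF nash that] .
  have "evasion_gain s {} = 0" by (simp add: evasion_gain_def detected_count_def Fdet_def)
  hence nonempty: "{} \<notin> set_pmf t" using support[of "{}"] U2_pos by auto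
  have "det_rate C (s, t) = (\<Sum>T\<in>Pow E. pmf t T * (detected_count s T / real (card T)))"
    by (rule det_rate_eq_mean[OF Pow])
  also have "\<dots> \<le> 1 - U2 C s t / real b2"
  proof (rule sum_pmf_le_on_support[OF finite_Pow_E Pow(2)], intro ballI)
    fix T assume T: "T \<in> set_pmf t"
    have "card T \<le> b2" "T \<subseteq> E" using T valid unfolding valid_profile_def A2_def by auto
    moreover have "T \<noteq> {}" using T nonempty by auto
    ultimately have card: "0 < card T" "card T \<le> b2"
      using finite_E finite_subset by (auto simp: card_gt_0_iff)
    have "detected_count s T / real (card T) = 1 - U2 C s t / real (card T)"
      using support[OF T] card by (simp add: evasion_gain_def field_simps)
    also have "\<dots> \<le> 1 - U2 C s t / real b2"
      using U2_pos card by (simp add: frac_le)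
    finally show "detected_count s T / real (card T) \<le> 1 - U2 C s t / real b2" .
  qed
  also have "\<dots> \<le> real b1 / ?m"
  proof -
    have "(real b2 - real b2 / ?m * real b1) / real b2 \<le> U2 C s t / real b2"
      using U2 by (simp add: divide_right_mono)
    moreover have "(real b2 - real b2 / ?m * real b1) / real b2 = 1 - real b1 / ?m"
      using \<open>0 < b2\<close> by (simp add: diff_divide_distrib)
    ultimately show ?thesis by linarith
  qed
  finally show ?thesis using nonempty by simp
qed

lemma det_rate_ge_U1:
  assumes valid: "valid_profile V E b1 b2 (s, t)" and "{} \<notin> set_pmf t"
  shows "U1 C s t / real b2 \<le> det_rate C (s, t)"
proof -
  note Pow = valid_profile_Pow[OF valid]
  have "U1 C s t / real b2 = (\<Sum>T\<in>Pow E. pmf t T * (detected_count s T / real b2))"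
    unfolding U1_eq_mean_detected_count[OF Pow order_refl] sum_divide_distrib by simp
  also have "\<dots> \<le> (\<Sum>T\<in>Pow E. pmf t T * (detected_count s T / real (card T)))"
  proof (rule sum_pmf_mono_on_support, intro ballI)
    fix T assume T: "T \<in> set_pmf t"
    hence "card T \<le> b2" "T \<subseteq> E" "T \<noteq> {}"
      using valid assms(2) unfolding valid_profile_def A2_def by auto
    hence "0 < card T" "card T \<le> b2" using finite_E finite_subset by (auto simp: card_gt_0_iff)
    moreover have "0 \<le> detected_count s T"
      unfolding detected_count_def by (intro sum_nonneg) auto
    ultimately show "detected_count s T / real b2 \<le> detected_count s T / real (card T)"
      by (intro divide_left_mono) auto
  qed
  also have "\<dots> = det_rate C (s, t)" by (rule det_rate_eq_mean[OF Pow, symmetric])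
  finally show ?thesis .
qed

lemma det_rate_eq_1_if_surely_covered:
  assumes valid: "valid_profile V E b1 b2 (s, t)" and "{} \<notin> set_pmf t"
    and covered: "\<forall>S\<in>set_pmf s. cover_set C S = E"
  shows "det_rate C (s, t) = 1"
proof -
  note Pow = valid_profile_Pow[OF valid]
  have one: "detected_count s T / real (card T) = 1" if T: "T \<in> set_pmf t" for T
  proof -
    have "T \<subseteq> E" "T \<noteq> {}" using T Pow(2) assms(2) by auto
    hence "0 < card T" using finite_E finite_subset by (auto simp: card_gt_0_iff)
    moreover have "detected_count s T = real (card T)"
      unfolding detected_count_def
      using covered \<open>T \<subseteq> E\<close> by (intro sum_pmf_eq_on_support[OF finite_Pow_V Pow(1)])
        (simp add: Fdet_def Int_absorb1)
    ultimately show ?thesis by simp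
  qed
  have "det_rate C (s, t) = (\<Sum>T\<in>Pow E. pmf t T * (detected_count s T / real (card T)))"
    by (rule det_rate_eq_mean[OF Pow])
  also have "\<dots> = 1"
    using one by (intro sum_pmf_eq_on_support[OF finite_Pow_E Pow(2)]) blast
  finally show ?thesis .
qed

lemma nash_U1_ge_full_attacks:
  assumes nash: "nash V E C b1 b2 (s, t)" and full: "\<forall>T\<in>set_pmf t. card T = b2"
    and xs: "distinct xs" "set xs \<subseteq> V" "cover_set C (set xs) = E" "b1 \<le> length xs" "xs \<noteq> []"
  shows "real b1 / real (length xs) * real b2 \<le> U1 C s t"
proof -
  have valid: "valid_profile V E b1 b2 (s, t)"
    using nash unfolding nash_def eps_nash_def by simp
  note Pow = valid_profile_Pow[OF valid]
  have "(\<Sum>e\<in>E. attack_prob t e) = real b2"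
    using mean_card_eq_sum_attack_prob[OF Pow(2)] full
      sum_pmf_eq_on_support[OF finite_Pow_E Pow(2), of "\<lambda>T. real (card T)"] by simp
  hence "real b1 / real (length xs) * real b2 \<le> U1 C (cyc_strategy xs b1) t"
    using U1_cyc_defense_ge[OF xs(1,2,4,5,3) Pow(2)] by simp
  also have "\<dots> \<le> U1 C s t"
    using nash cyc_strategy_A1[OF xs(1,2,4,5)] unfolding nash_def eps_nash_def by simp
  finally show ?thesis .
qed

lemma evasion_gain_insert:
  assumes "T \<subseteq> E" "e \<in> E" "e \<notin> T"
  shows "evasion_gain s (insert e T) = evasion_gain s T + (1 - cover_prob s e)"
proof -
  have "finite T" using assms(1) finite_E finite_subset by blast
  thus ?thesis using assms by (simp add: evasion_gain_eq_sum)
qed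

lemma cover_prob_lt_1:
  assumes "set_pmf s \<subseteq> Pow V" "S0 \<in> set_pmf s" "a \<notin> cover_set C S0"
  shows "cover_prob s a < 1"
proof -
  have "pmf s S0 = pmf s S0 * (if a \<in> cover_set C S0 then 0 else 1)" using assms(3) by simp
  also have "\<dots> \<le> (\<Sum>S\<in>Pow V. pmf s S * (if a \<in> cover_set C S then 0 else 1))"
    using assms(1,2) finite_Pow_V by (intro member_le_sum) auto
  also have "\<dots> = (\<Sum>S\<in>Pow V. pmf s S) - cover_prob s a"
    unfolding cover_prob_def by (simp add: sum_subtractf[symmetric] if_distrib cong: if_cong)
  also have "\<dots> = 1 - cover_prob s a" using sum_pmf_eq_1[OF finite_Pow_V assms(1)] by simp
  finally show ?thesis using pmf_positive[OF assms(2)] by simp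
qed

text \<open>Otherwise adding e to the short attack T0 would increase the attacker's payoff.\<close>
lemma nash_short_attack_covers_rest:
  assumes nash: "nash V E C b1 b2 (s, t)" and T0: "T0 \<in> set_pmf t" "card T0 < b2"
    and e: "e \<in> E" "e \<notin> T0"
  shows "cover_prob s e = 1"
proof -
  have valid: "valid_profile V E b1 b2 (s, t)"
    using nash unfolding nash_def eps_nash_def by simp
  have T0E: "T0 \<subseteq> E" using T0(1) valid unfolding valid_profile_def A2_def by auto
  hence "finite T0" using finite_E finite_subset by blast
  hence "insert e T0 \<in> A2 E b2" using T0(2) T0E e unfolding A2_def by auto
  hence "evasion_gain s (insert e T0) \<le> evasion_gain s T0"
    using eps_nash_evasion_gain_le[of b1 b2 0 s t] nash nash_evasion_gain_on_support[OF nash T0(1)]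
    unfolding nash_def by simp
  thus ?thesis
    using evasion_gain_insert[OF T0E e] cover_prob_le_1[OF valid_profile_Pow(1)[OF valid], of e]
    by simp
qed

lemma nash_always_attacks_uncovered:
  assumes nash: "nash V E C b1 b2 (s, t)" and T0: "T0 \<in> set_pmf t" "card T0 < b2"
    and a: "a \<in> E" "cover_prob s a < 1" and T: "T \<in> set_pmf t"
  shows "a \<in> T"
proof (rule ccontr)
  assume "a \<notin> T"
  have valid: "valid_profile V E b1 b2 (s, t)"
    using nash unfolding nash_def eps_nash_def by simp
  have TE: "T \<subseteq> E" and "card T \<le> b2"
    using T valid unfolding valid_profile_def A2_def by auto
  have "finite T" using TE finite_E by (rule finite_subset)
  have better: "U2 C s t < evasion_gain s (insert a T')"
    if "T' \<subseteq> E" "a \<notin> T'" "evasion_gain s T' = U2 C s t" for T'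
    using evasion_gain_insert[OF that(1) a(1) that(2)] a(2) that(3) by simp
  have deviation: "evasion_gain s T' \<le> U2 C s t" if "T' \<in> A2 E b2" for T'
    using eps_nash_evasion_gain_le[of b1 b2 0 s t T'] nash that unfolding nash_def by simp
  show False
  proof (cases "card T < b2")
    case True
    hence "insert a T \<in> A2 E b2"
      using TE a(1) \<open>finite T\<close> \<open>a \<notin> T\<close> unfolding A2_def by auto
    from deviation[OF this] better[OF TE \<open>a \<notin> T\<close> nash_evasion_gain_on_support[OF nash T]]
    show False by simp
  next
    case False
    have "\<not> T \<subseteq> T0"
    proof
      assume "T \<subseteq> T0"
      moreover have "T0 \<subseteq> E" using T0(1) valid unfolding valid_profile_def A2_def by auto
      hence "finite T0" using finite_E by (rule finite_subset)
      ultimately have "card T \<le> card T0" by (rule card_mono[rotated])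
      thus False using False T0(2) by linarith
    qed
    then obtain e where e: "e \<in> T" "e \<notin> T0" by blast
    hence "cover_prob s e = 1" using nash_short_attack_covers_rest[OF nash T0] TE by auto
    moreover have "T - {e} \<subseteq> E" "e \<in> E" using TE e(1) by auto
    ultimately have "evasion_gain s (T - {e}) = U2 C s t"
      using evasion_gain_insert[of "T - {e}" e s] e(1) nash_evasion_gain_on_support[OF nash T]
      by (simp add: insert_absorb)
    moreover have "0 < card T" using e(1) \<open>finite T\<close> card_gt_0_iff by blast
    hence "insert a (T - {e}) \<in> A2 E b2"
      using TE a(1) \<open>finite T\<close> \<open>a \<notin> T\<close> \<open>card T \<le> b2\<close> e(1)
      unfolding A2_def by (auto simp: card_Diff_singleton)
    moreover have "T - {e} \<subseteq> E" "a \<notin> T - {e}" using TE \<open>a \<notin> T\<close> by auto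
    ultimately show False using better[of "T - {e}"] deviation[of "insert a (T - {e})"] by simp
  qed
qed

lemma detection_gain_insert:
  assumes "S \<subseteq> V" "j \<in> V" "a \<in> C j" "a \<notin> cover_set C S"
  shows "detection_gain t S + attack_prob t a \<le> detection_gain t (insert j S)"
proof -
  have S': "insert j S \<subseteq> V" using assms by auto
  have "detection_gain t S + attack_prob t a = (\<Sum>e\<in>insert a (cover_set C S). attack_prob t e)"
    using detection_gain_eq_sum[OF assms(1)] finite_cover_set[OF assms(1)] assms(4) by simp
  also have "\<dots> \<le> (\<Sum>e\<in>cover_set C (insert j S). attack_prob t e)"
    using assms finite_cover_set[OF S'] attack_prob_nonneg
    by (intro sum_mono2) (auto simp: cover_set_def)
  also have "\<dots> = detection_gain t (insert j S)" using detection_gain_eq_sum[OF S'] by simp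
  finally show ?thesis .
qed

text \<open>The elements covered by S0 but not by S0 - {i} are disjoint for different i.\<close>
lemma sum_detection_gain_loss_le:
  assumes "S0 \<subseteq> V"
  shows "(\<Sum>i\<in>S0. detection_gain t S0 - detection_gain t (S0 - {i})) \<le> detection_gain t S0"
proof -
  have "finite S0" using assms finite_V by (rule finite_subset)
  define U where "U i = cover_set C S0 - cover_set C (S0 - {i})" for i
  have finite: "finite (cover_set C S0)" by (rule finite_cover_set[OF assms])
  have "detection_gain t S0 - detection_gain t (S0 - {i}) = (\<Sum>e\<in>U i. attack_prob t e)" for i
  proof -
    have "cover_set C (S0 - {i}) \<subseteq> cover_set C S0" unfolding cover_set_def by auto
    moreover have "S0 - {i} \<subseteq> V" using assms by auto
    ultimately show ?thesis
      unfolding U_def detection_gain_eq_sum[OF assms] using finite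
      by (simp add: detection_gain_eq_sum sum_diff)
  qed
  hence "(\<Sum>i\<in>S0. detection_gain t S0 - detection_gain t (S0 - {i})) =
           (\<Sum>i\<in>S0. \<Sum>e\<in>U i. attack_prob t e)" by simp
  also have "\<dots> = (\<Sum>e\<in>(\<Union>i\<in>S0. U i). attack_prob t e)"
    using finite \<open>finite S0\<close>
    by (intro sum.UNION_disjoint[symmetric]) (auto simp: U_def cover_set_def)
  also have "\<dots> \<le> (\<Sum>e\<in>cover_set C S0. attack_prob t e)"
    using finite attack_prob_nonneg unfolding U_def by (intro sum_mono2) auto
  also have "\<dots> = detection_gain t S0" using detection_gain_eq_sum[OF assms] by simp
  finally show ?thesis .
qed

text \<open>If a surely attacked element a is missed by some S0 in the equilibrium support, replacing
  any i in S0 by a vertex covering a would gain the full unit of a; hence each i in S0 accounts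
  for at least one unit of exclusive detection, and card S0 = b1.\<close>
lemma nash_U1_ge_budget:
  assumes nash: "nash V E C b1 b2 (s, t)" and a: "a \<in> E" "attack_prob t a = 1"
    and S0: "S0 \<in> set_pmf s" "a \<notin> cover_set C S0"
  shows "real b1 \<le> U1 C s t"
proof -
  have valid: "valid_profile V E b1 b2 (s, t)"
    using nash unfolding nash_def eps_nash_def by simp
  have S0V: "S0 \<subseteq> V" and "card S0 \<le> b1"
    using S0(1) valid unfolding valid_profile_def A1_def by auto
  have "finite S0" using S0V finite_V by (rule finite_subset)
  obtain j where j: "j \<in> V" "a \<in> C j" using E_covered a(1) by blast
  hence "j \<notin> S0" using S0(2) unfolding cover_set_def by auto
  have U1: "detection_gain t S0 = U1 C s t"
    by (rule nash_detection_gain_on_support[OF nash S0(1)])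
  have improve: "detection_gain t S + 1 \<le> U1 C s t"
    if "S \<subseteq> S0" "card (insert j S) \<le> b1" for S
  proof -
    have "insert j S \<in> A1 V b1" using that S0V j(1) unfolding A1_def by auto
    hence "detection_gain t (insert j S) \<le> U1 C s t"
      using eps_nash_detection_gain_le[of b1 b2 0 s t] nash unfolding nash_def by simp
    moreover have "a \<notin> cover_set C S" using that(1) S0(2) unfolding cover_set_def by auto
    moreover have "S \<subseteq> V" using that(1) S0V by blast
    ultimately show ?thesis
      using detection_gain_insert[of S j a t] j a(2) by simp
  qed
  have "b1 \<le> card S0"
  proof (rule ccontr)
    assume "\<not> b1 \<le> card S0"
    hence "card (insert j S0) \<le> b1" using \<open>finite S0\<close> \<open>j \<notin> S0\<close> by simp
    thus False using improve[of S0] U1 by simp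
  qed
  have "1 \<le> detection_gain t S0 - detection_gain t (S0 - {i})" if "i \<in> S0" for i
  proof -
    have "0 < card S0" using that \<open>finite S0\<close> card_gt_0_iff by blast
    hence "card (insert j (S0 - {i})) = card S0"
      using that \<open>finite S0\<close> \<open>j \<notin> S0\<close> by (simp add: card_Diff_singleton)
    thus ?thesis using improve[of "S0 - {i}"] U1 \<open>card S0 \<le> b1\<close> by simp
  qed
  hence "(\<Sum>i\<in>S0. 1) \<le> (\<Sum>i\<in>S0. detection_gain t S0 - detection_gain t (S0 - {i}))"
    by (rule sum_mono)
  hence "real (card S0) \<le> (\<Sum>i\<in>S0. detection_gain t S0 - detection_gain t (S0 - {i}))"
    by simp
  also have "\<dots> \<le> detection_gain t S0" by (rule sum_detection_gain_loss_le[OF S0V])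
  also have "\<dots> = U1 C s t" by (rule U1)
  finally show ?thesis using \<open>b1 \<le> card S0\<close> by simp
qed

lemma nash_det_rate_ge_cover:
  assumes nash: "nash V E C b1 b2 (s, t)" and "{} \<notin> set_pmf t" "0 < b2"
    and xs: "distinct xs" "set xs \<subseteq> V" "cover_set C (set xs) = E" "b1 \<le> length xs" "b2 \<le> length xs"
  shows "real b1 / real (length xs) \<le> det_rate C (s, t)"
proof -
  let ?n = "real (length xs)"
  have valid: "valid_profile V E b1 b2 (s, t)"
    using nash unfolding nash_def eps_nash_def by simp
  note Pow = valid_profile_Pow[OF valid]
  have "xs \<noteq> []" using xs(5) \<open>0 < b2\<close> by auto
  have rate: "U1 C s t / real b2 \<le> det_rate C (s, t)"
    by (rule det_rate_ge_U1[OF valid assms(2)])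
  have b2_n: "real b1 / ?n \<le> real b1 / real b2"
    using xs(5) \<open>0 < b2\<close> by (simp add: frac_le)
  consider "\<forall>T\<in>set_pmf t. card T = b2" | T0 where "T0 \<in> set_pmf t" "card T0 < b2"
    using valid unfolding valid_profile_def A2_def by (force simp: order.order_iff_strict)
  thus ?thesis
  proof cases
    case 1
    hence "real b1 / ?n * real b2 \<le> U1 C s t"
      by (intro nash_U1_ge_full_attacks[OF nash _ xs(1-4) \<open>xs \<noteq> []\<close>])
    hence "real b1 / ?n \<le> U1 C s t / real b2" using \<open>0 < b2\<close> by (simp add: field_simps)
    with rate show ?thesis by linarith
  next
    case (2 T0)
    show ?thesis
    proof (cases "\<forall>S\<in>set_pmf s. cover_set C S = E")
      case True
      hence "det_rate C (s, t) = 1" by (rule det_rate_eq_1_if_surely_covered[OF valid assms(2)])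
      thus ?thesis using xs(4) by (simp add: divide_le_eq)
    next
      case False
      then obtain S0 a where S0: "S0 \<in> set_pmf s" and a: "a \<in> E" "a \<notin> cover_set C S0"
        using cover_set_subset Pow(1) by blast
      have "\<forall>T\<in>set_pmf t. a \<in> T"
        using nash_always_attacks_uncovered[OF nash 2 a(1) cover_prob_lt_1[OF Pow(1) S0 a(2)]] by blast
      hence "attack_prob t a = 1"
        unfolding attack_prob_def by (intro sum_pmf_eq_on_support[OF finite_Pow_E Pow(2)]) simp
      hence "real b1 \<le> U1 C s t" by (rule nash_U1_ge_budget[OF nash a(1) _ S0 a(2)])
      hence "real b1 / real b2 \<le> U1 C s t / real b2" by (simp add: divide_right_mono)
      with rate b2_n show ?thesis by linarith
    qed
  qed
qed

section \<open>The cyclic \<epsilon>-equilibrium\<close>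

lemma detection_gain_cyc_attack_le:
  assumes ys: "distinct ys" "is_set_packing V E C (set ys)" "b2 \<le> length ys" "ys \<noteq> []"
    and S: "S \<in> A1 V b1" and "0 < b1"
  shows "detection_gain (cyc_strategy ys b2) S \<le> real b1 * real b2 / max (real b1) (real (length ys))"
proof -
  let ?m = "real (length ys)"
  have SV: "S \<subseteq> V" and "card S \<le> b1" using S unfolding A1_def by auto
  have Y: "set ys \<subseteq> E" using ys(2) unfolding is_set_packing_def by simp
  have "detection_gain (cyc_strategy ys b2) S =
          (\<Sum>e\<in>cover_set C S. if e \<in> set ys then real b2 / ?m else 0)"
    using detection_gain_eq_sum[OF SV] attack_prob_cyc_strategy[OF ys(1) Y ys(3,4)] by simp
  also have "\<dots> = real (card (cover_set C S \<inter> set ys)) * (real b2 / ?m)"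
    using finite_cover_set[OF SV] by (simp add: sum.If_cases)
  finally have gain: "detection_gain (cyc_strategy ys b2) S = \<dots>" .
  have "card (cover_set C S \<inter> set ys) \<le> b1"
    using card_cover_set_inter_packing[OF ys(2) SV] \<open>card S \<le> b1\<close> by simp
  moreover have "card (cover_set C S \<inter> set ys) \<le> length ys"
    using card_mono[of "set ys" "cover_set C S \<inter> set ys"] distinct_card[OF ys(1)] by auto
  ultimately have "real (card (cover_set C S \<inter> set ys)) * (real b2 / ?m) \<le> min (real b1) ?m * (real b2 / ?m)"
    by (intro mult_right_mono) auto
  also have "\<dots> = real b1 * real b2 / max (real b1) ?m"
    using \<open>0 < b1\<close> ys(4) by (cases "real b1 \<le> ?m") (auto simp: min_def max_def)
  finally show ?thesis using gain by simp
qed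

lemma evasion_gain_cyc_defense_le:
  assumes xs: "distinct xs" "set xs \<subseteq> V" "cover_set C (set xs) = E" "b1 \<le> length xs" "xs \<noteq> []"
    and T: "T \<in> A2 E b2"
  shows "evasion_gain (cyc_strategy xs b1) T \<le> real b2 * (1 - real b1 / real (length xs))"
proof -
  have TE: "T \<subseteq> E" and "card T \<le> b2" using T unfolding A2_def by auto
  have "evasion_gain (cyc_strategy xs b1) T \<le> (\<Sum>e\<in>T. 1 - real b1 / real (length xs))"
    unfolding evasion_gain_eq_sum[OF TE]
    using cover_prob_cyc_strategy_ge[OF xs(1,2,4,5,3)] TE by (intro sum_mono) auto
  also have "\<dots> \<le> real b2 * (1 - real b1 / real (length xs))"
    using \<open>card T \<le> b2\<close> xs(4) by (simp add: mult_right_mono divide_le_eq)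
  finally show ?thesis .
qed

text \<open>Against the cyclic attack each defense detects at most b1 b2 / max b1 m, while the cyclic
  defense covers every element with probability at least b1 / n; the difference of these two
  bounds is the slack epsilon for both players.\<close>
lemma cyc_strategies_eps_nash:
  assumes xs: "distinct xs" "set xs \<subseteq> V" "cover_set C (set xs) = E" "b1 \<le> length xs" "0 < b1"
    and ys: "distinct ys" "is_set_packing V E C (set ys)" "b2 \<le> length ys" "0 < b2"
  shows "eps_nash V E C b1 b2
           (real b1 * real b2 * (1 / max (real b1) (real (length ys)) - 1 / real (length xs)))
           (cyc_strategy xs b1, cyc_strategy ys b2)"
proof -
  let ?s = "cyc_strategy xs b1" and ?t = "cyc_strategy ys b2"
  let ?hi = "real b1 * real b2 / max (real b1) (real (length ys))"
  let ?lo = "real b1 / real (length xs) * real b2"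
  have "xs \<noteq> []" "ys \<noteq> []" using xs(4,5) ys(3,4) by auto
  have Y: "set ys \<subseteq> E" using ys(2) unfolding is_set_packing_def by simp
  have sA1: "set_pmf ?s \<subseteq> A1 V b1" by (rule cyc_strategy_A1[OF xs(1,2,4) \<open>xs \<noteq> []\<close>])
  have tA2: "set_pmf ?t \<subseteq> A2 E b2" by (rule cyc_strategy_A2[OF ys(1) Y ys(3) \<open>ys \<noteq> []\<close>])
  have sPow: "set_pmf ?s \<subseteq> Pow V" and tPow: "set_pmf ?t \<subseteq> Pow E"
    using sA1 tA2 A1_subset_Pow[of V b1] A2_subset_Pow[of E b2] by blast+
  have detection: "detection_gain ?t S \<le> ?hi" if "S \<in> A1 V b1" for S
    using detection_gain_cyc_attack_le[OF ys(1-3) \<open>ys \<noteq> []\<close> that xs(5)] .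
  have "U1 C ?s ?t = (\<Sum>S\<in>A1 V b1. pmf ?s S * detection_gain ?t S)"
    by (rule U1_eq_mean_detection_gain[OF sA1 A1_subset_Pow tPow])
  also have "\<dots> \<le> ?hi"
    using sA1 detection by (intro sum_pmf_le_on_support[OF finite_A1 sA1]) blast
  finally have "U1 C ?s ?t \<le> ?hi" .
  moreover have lo: "?lo \<le> U1 C ?s ?t"
    using U1_cyc_defense_ge[OF xs(1,2,4) \<open>xs \<noteq> []\<close> xs(3) tPow]
      sum_attack_prob_cyc_strategy[OF ys(1) Y ys(3) \<open>ys \<noteq> []\<close>] by simp
  moreover have "U2 C ?s ?t = real b2 - U1 C ?s ?t"
    by (rule U2_cyc_attack[OF ys(1) Y ys(3) \<open>ys \<noteq> []\<close> sPow])
  moreover have "evasion_gain ?s T \<le> real b2 - ?lo" if "T \<in> A2 E b2" for T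
    using evasion_gain_cyc_defense_le[OF xs(1-4) \<open>xs \<noteq> []\<close> that]
    by (simp add: right_diff_distrib mult.commute)
  ultimately have evasion: "evasion_gain ?s T \<le> U2 C ?s ?t + (?hi - ?lo)" if "T \<in> A2 E b2" for T
    using that by fastforce
  have "real b1 * real b2 * (1 / max (real b1) (real (length ys)) - 1 / real (length xs)) = ?hi - ?lo"
    by (simp add: right_diff_distrib)
  moreover have "valid_profile V E b1 b2 (?s, ?t)" using sA1 tA2 unfolding valid_profile_def by simp
  moreover have "detection_gain ?t S \<le> U1 C ?s ?t + (?hi - ?lo)" if "S \<in> A1 V b1" for S
    using detection[OF that] lo by linarith
  ultimately show ?thesis using evasion by (simp add: eps_nashI)
qed

lemma rate_ok_ceiling_le:
  assumes ys: "distinct ys" "is_set_packing V E C (set ys)" "b2 \<le> length ys" "0 < b2"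
    and "\<alpha> \<le> 1" and ok: "rate_ok V E C \<alpha> b b2"
  shows "\<lceil>\<alpha> * real (length ys)\<rceil> \<le> int b"
proof (rule ccontr)
  assume "\<not> \<lceil>\<alpha> * real (length ys)\<rceil> \<le> int b"
  hence "int b < \<lceil>\<alpha> * real (length ys)\<rceil>" by simp
  hence lt: "real b < \<alpha> * real (length ys)" by (simp add: less_ceiling_iff)
  moreover have "\<alpha> * real (length ys) \<le> real (length ys)"
    using mult_right_mono[OF \<open>\<alpha> \<le> 1\<close>, of "real (length ys)"] by simp
  ultimately have "b < length ys" by linarith
  obtain s t where nash: "nash V E C b b2 (s, t)" using nash_exists by fast
  have "{} \<notin> set_pmf t \<and> det_rate C (s, t) \<le> real b / real (length ys)"
    by (rule nash_det_rate_le_packing[OF nash ys(1-3) \<open>b < length ys\<close> ys(4)])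
  moreover have "0 < real (length ys)" using \<open>b < length ys\<close> by linarith
  hence "real b / real (length ys) < \<alpha>"
    using lt by (simp add: divide_less_eq mult.commute)
  ultimately show False using ok nash unfolding rate_ok_def by fastforce
qed

lemma rate_ok_if_cover:
  assumes xs: "distinct xs" "set xs \<subseteq> V" "cover_set C (set xs) = E" "b1 \<le> length xs" "b2 \<le> length xs"
    and "0 < b2" and "\<alpha> \<le> real b1 / real (length xs)"
  shows "rate_ok V E C \<alpha> b1 b2"
  unfolding rate_ok_def
proof (intro allI impI)
  fix \<sigma> assume "nash V E C b1 b2 \<sigma> \<and> {} \<notin> set_pmf (snd \<sigma>)"
  then obtain s t where "\<sigma> = (s, t)" "nash V E C b1 b2 (s, t)" "{} \<notin> set_pmf t"
    by (cases \<sigma>) auto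
  thus "\<alpha> \<le> det_rate C \<sigma>"
    using nash_det_rate_ge_cover[of b1 b2 s t xs] assms by auto
qed

section \<open>Set covers, set packings and the budget\<close>

lemma exists_min_set_cover: "\<exists>S. is_min_set_cover V E C S"
proof -
  have "is_set_cover V E C V"
    unfolding is_set_cover_def cover_set_def using C_subset_E E_covered by auto
  hence "\<exists>n S. is_set_cover V E C S \<and> card S = n" by blast
  hence "\<exists>S. is_set_cover V E C S \<and> card S = nstar V E C"
    unfolding nstar_def by (rule LeastI_ex)
  thus ?thesis unfolding is_min_set_cover_def .
qed

lemma exists_max_set_packing: "\<exists>T. is_max_set_packing V E C T"
proof -
  have "{card T | T. is_set_packing V E C T} \<subseteq> card ` Pow E"
    unfolding is_set_packing_def by auto
  hence "finite {card T | T. is_set_packing V E C T}"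
    using finite_imageI[OF finite_Pow_E] by (rule finite_subset)
  moreover have "is_set_packing V E C {}" unfolding is_set_packing_def by simp
  hence "{card T | T. is_set_packing V E C T} \<noteq> {}" by blast
  ultimately have "mstar V E C \<in> {card T | T. is_set_packing V E C T}"
    unfolding mstar_def by (rule Max_in)
  thus ?thesis unfolding is_max_set_packing_def by auto
qed

lemma min_set_cover_list:
  assumes "is_min_set_cover V E C (set xs)" "distinct xs"
  shows "set xs \<subseteq> V" "cover_set C (set xs) = E" "length xs = nstar V E C"
proof -
  have "is_set_cover V E C (set xs)" "card (set xs) = nstar V E C"
    using assms(1) unfolding is_min_set_cover_def by simp_all
  thus "set xs \<subseteq> V" "cover_set C (set xs) = E" "length xs = nstar V E C"
    using distinct_card[OF assms(2)] unfolding is_set_cover_def by simp_all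
qed

lemma max_set_packing_list:
  assumes "is_max_set_packing V E C (set ys)" "distinct ys"
  shows "is_set_packing V E C (set ys)" "length ys = mstar V E C"
  using assms(1) distinct_card[OF assms(2)] unfolding is_max_set_packing_def by simp_all

lemma mstar_le_nstar: "mstar V E C \<le> nstar V E C"
proof -
  obtain S T where S: "is_min_set_cover V E C S" and T: "is_max_set_packing V E C T"
    using exists_min_set_cover exists_max_set_packing by blast
  have "S \<subseteq> V" "cover_set C S = E" "card S = nstar V E C"
    using S unfolding is_min_set_cover_def is_set_cover_def by simp_all
  moreover have "is_set_packing V E C T" "T \<subseteq> E" "card T = mstar V E C"
    using T unfolding is_max_set_packing_def is_set_packing_def by simp_all
  ultimately show ?thesis
    using card_cover_set_inter_packing[of T S] by (simp add: Int_absorb1)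
qed

lemma min_set_cover_list_exists: "\<exists>xs. is_min_set_cover V E C (set xs) \<and> distinct xs"
proof -
  obtain S where S: "is_min_set_cover V E C S" using exists_min_set_cover by blast
  hence "S \<subseteq> V" unfolding is_min_set_cover_def is_set_cover_def by simp
  hence "finite S" using finite_V by (rule finite_subset)
  then obtain xs where "set xs = S" "distinct xs" using finite_distinct_list by blast
  thus ?thesis using S by blast
qed

lemma max_set_packing_list_exists: "\<exists>ys. is_max_set_packing V E C (set ys) \<and> distinct ys"
proof -
  obtain T where T: "is_max_set_packing V E C T" using exists_max_set_packing by blast
  hence "T \<subseteq> E" unfolding is_max_set_packing_def is_set_packing_def by simp
  hence "finite T" using finite_E by (rule finite_subset)
  then obtain ys where "set ys = T" "distinct ys" using finite_distinct_list by blast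
  thus ?thesis using T by blast
qed

lemma rate_ok_lower_bound:
  assumes "\<alpha> \<le> 1" "0 < b2" "b2 \<le> mstar V E C" "rate_ok V E C \<alpha> b b2"
  shows "\<lceil>\<alpha> * real (mstar V E C)\<rceil> \<le> int b"
proof -
  obtain ys where ys: "is_max_set_packing V E C (set ys)" "distinct ys"
    using max_set_packing_list_exists by blast
  note packing = max_set_packing_list[OF ys]
  from rate_ok_ceiling_le[OF ys(2) packing(1) _ assms(2,1,4)] show ?thesis
    using packing(2) assms(3) by simp
qed

lemma rate_ok_budget:
  assumes "\<alpha> \<le> real b1 / real (nstar V E C)" "b1 \<le> nstar V E C" "0 < b2" "b2 \<le> nstar V E C"
  shows "rate_ok V E C \<alpha> b1 b2"
proof -
  obtain xs where xs: "is_min_set_cover V E C (set xs)" "distinct xs"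
    using min_set_cover_list_exists by blast
  note cover = min_set_cover_list[OF xs]
  show ?thesis using assms cover by (intro rate_ok_if_cover[OF xs(2)]) simp_all
qed

lemma feasible_Peps_cyclic:
  assumes xs: "is_min_set_cover V E C (set xs)" "distinct xs"
    and ys: "is_max_set_packing V E C (set ys)" "distinct ys"
    and "0 < b1" "b1 \<le> nstar V E C" "0 < b2" "b2 \<le> mstar V E C" "rate_ok V E C \<alpha> b1 b2"
  shows "feasible_Peps V E C \<alpha> b2
           (real b1 * real b2 * (1 / max (real b1) (real (mstar V E C)) - 1 / real (nstar V E C)))
           b1 (cyc_strategy xs b1, cyc_strategy ys b2)"
proof -
  note cover = min_set_cover_list[OF xs] and packing = max_set_packing_list[OF ys]
  have "eps_nash V E C b1 b2
          (real b1 * real b2 * (1 / max (real b1) (real (length ys)) - 1 / real (length xs)))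
          (cyc_strategy xs b1, cyc_strategy ys b2)"
    using assms cover packing by (intro cyc_strategies_eps_nash) simp_all
  thus ?thesis using assms cover packing unfolding feasible_Peps_def by simp
qed

end

lemma nat_ceiling_mult_bounds:
  fixes \<alpha> :: real and N :: nat
  assumes "0 < \<alpha>" "\<alpha> \<le> 1" "0 < N"
  defines "b \<equiv> nat \<lceil>\<alpha> * real N\<rceil>"
  shows "int b = \<lceil>\<alpha> * real N\<rceil>" "0 < b" "b \<le> N" "\<alpha> \<le> real b / real N"
proof -
  have "0 < \<lceil>\<alpha> * real N\<rceil>" using assms(1,3) by simp
  thus "int b = \<lceil>\<alpha> * real N\<rceil>" by (simp add: b_def)
  thus "0 < b" using assms by simp
  have "\<alpha> * real N \<le> real N" using mult_right_mono[OF assms(2), of "real N"] by simp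
  hence "\<lceil>\<alpha> * real N\<rceil> \<le> int N" by (simp add: ceiling_le_iff)
  thus "b \<le> N" using \<open>int b = _\<close> by simp
  have "\<alpha> * real N \<le> real_of_int \<lceil>\<alpha> * real N\<rceil>" by (rule le_of_int_ceiling)
  also have "\<dots> = real b" unfolding \<open>int b = _\<close>[symmetric] by simp
  finally have "\<alpha> * real N \<le> real b" .
  thus "\<alpha> \<le> real b / real N" using assms(3) by (simp add: le_divide_eq)
qed

lemma Least_bounds:
  assumes "P (k :: nat)" "\<And>b. P b \<Longrightarrow> l \<le> int b"
  shows "l \<le> int (LEAST b. P b)" "(LEAST b. P b) \<le> k"
  using LeastI[of P k] Least_le[of P k] assms by simp_all

theorem proposition4:
  fixes V :: "'v set" and E :: "'e set" and C :: "'v \<Rightarrow> 'e set"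
    and \<alpha> :: real and b2 :: nat and b1' :: nat and \<epsilon> :: real
  assumes "finite V" "V \<noteq> {}" "finite E" "E \<noteq> {}"
    and "\<forall>i\<in>V. C i \<subseteq> E" and "\<forall>e\<in>E. \<exists>i\<in>V. e \<in> C i"
    and "0 < \<alpha>" "\<alpha> \<le> 1"
    and "0 < b2" "b2 < mstar V E C"
  defines "b1' \<equiv> nat \<lceil>\<alpha> * real (nstar V E C)\<rceil>"
    and "\<epsilon> \<equiv> real b1' * real b2 *
               (1 / max (real b1') (real (mstar V E C)) - 1 / real (nstar V E C))"
  shows
    "(\<forall>Smin Tmax xs ys. is_min_set_cover V E C Smin \<and> is_max_set_packing V E C Tmax \<and>
        distinct xs \<and> set xs = Smin \<and> distinct ys \<and> set ys = Tmax \<longrightarrow>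
        feasible_Peps V E C \<alpha> b2 \<epsilon> b1' (cyc_strategy xs b1', cyc_strategy ys b2))
     \<and> (\<exists>b1 \<sigma>. feasible_P V E C \<alpha> b2 b1 \<sigma>)
     \<and> \<lceil>\<alpha> * real (mstar V E C)\<rceil> \<le> int (opt_P V E C \<alpha> b2)
     \<and> int (opt_P V E C \<alpha> b2) \<le> \<lceil>\<alpha> * real (nstar V E C)\<rceil>
     \<and> (\<exists>b1 \<sigma>. feasible_Peps V E C \<alpha> b2 \<epsilon> b1 \<sigma>)
     \<and> \<lceil>\<alpha> * real (mstar V E C)\<rceil> \<le> int (opt_Peps V E C \<alpha> b2 \<epsilon>)
     \<and> int (opt_Peps V E C \<alpha> b2 \<epsilon>) \<le> \<lceil>\<alpha> * real (nstar V E C)\<rceil>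
     \<and> int b1' - int (opt_P V E C \<alpha> b2)
         \<le> \<lceil>\<alpha> * real (nstar V E C)\<rceil> - \<lceil>\<alpha> * real (mstar V E C)\<rceil>
     \<and> int b1' - int (opt_Peps V E C \<alpha> b2 \<epsilon>)
         \<le> \<lceil>\<alpha> * real (nstar V E C)\<rceil> - \<lceil>\<alpha> * real (mstar V E C)\<rceil>"
proof -
  interpret detection_model V E C using assms(1,3,5,6) by unfold_locales
  have "b2 \<le> nstar V E C" "0 < nstar V E C" using assms(9,10) mstar_le_nstar by linarith+
  note budget = nat_ceiling_mult_bounds[OF assms(7,8) \<open>0 < nstar V E C\<close>, folded b1'_def]
  have rate: "rate_ok V E C \<alpha> b1' b2"
    using budget \<open>b2 \<le> nstar V E C\<close> assms(9) by (intro rate_ok_budget) auto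
  have cyclic: "feasible_Peps V E C \<alpha> b2 \<epsilon> b1' (cyc_strategy xs b1', cyc_strategy ys b2)"
    if "is_min_set_cover V E C (set xs)" "distinct xs" "is_max_set_packing V E C (set ys)" "distinct ys"
    for xs ys
    using feasible_Peps_cyclic[OF that budget(2,3) assms(9) _ rate] assms(10) by (simp add: \<epsilon>_def)
  obtain xs ys where "is_min_set_cover V E C (set xs)" "distinct xs"
    "is_max_set_packing V E C (set ys)" "distinct ys"
    using min_set_cover_list_exists max_set_packing_list_exists by blast
  hence feasible_Peps: "\<exists>\<sigma>. feasible_Peps V E C \<alpha> b2 \<epsilon> b1' \<sigma>" using cyclic by blast
  obtain \<sigma> where "nash V E C b1' b2 \<sigma>" using nash_exists by blast
  hence feasible_P: "\<exists>\<sigma>. feasible_P V E C \<alpha> b2 b1' \<sigma>"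
    using budget(2) rate unfolding feasible_P_def by blast
  have lower: "\<lceil>\<alpha> * real (mstar V E C)\<rceil> \<le> int b" if "rate_ok V E C \<alpha> b b2" for b
    using rate_ok_lower_bound[OF assms(8,9) _ that] assms(10) by simp
  have opt_P: "\<lceil>\<alpha> * real (mstar V E C)\<rceil> \<le> int (opt_P V E C \<alpha> b2)" "opt_P V E C \<alpha> b2 \<le> b1'"
    unfolding opt_P_def using feasible_P lower by (auto intro!: Least_bounds simp: feasible_P_def)
  have opt_Peps: "\<lceil>\<alpha> * real (mstar V E C)\<rceil> \<le> int (opt_Peps V E C \<alpha> b2 \<epsilon>)"
    "opt_Peps V E C \<alpha> b2 \<epsilon> \<le> b1'"
    unfolding opt_Peps_def using feasible_Peps lower by (auto intro!: Least_bounds simp: feasible_Peps_def)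
  show ?thesis
    using cyclic feasible_P feasible_Peps opt_P opt_Peps budget(1)
    unfolding feasible_P_def feasible_Peps_def by auto
qed

end
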